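(* Let $\{\mathcal L^{(1)}_t\}_{t\ge0}$ and $\{\mathcal L^{(2)}_t\}_{t\ge0}$ be two families of dynamical generators each of which generates SSC dynamics. Suppose that for every $\alpha,\beta\ge0$ the family $\mathcal L'_t:=\alpha\mathcal L^{(1)}_t+\beta\mathcal L^{(2)}_t$ is commutative, i.e. $[\mathcal L'_s,\mathcal L'_t]=0$ for all $s,t\ge0$. Then $\mathcal L^{(1)}$ and $\mathcal L^{(2)}$ are additive: for every $\alpha,\beta\ge0$ the family $\mathcal L'_t$ generates dynamics $\Lambda'_t=\exp\!\big(\int_0^t\mathcal L'_\tau d\tau\big)$ consisting of completely positive trace-preserving maps for all $t\ge0$ (indeed, SSC dynamics).
   Context: A dynamical generator is a linear, Hermiticity-preserving, trace-annihilating map on $d\times d$ complex matrices. Fix an orthonormal operator basis $\{F_i\}_{i=1}^{d^2}$ with $\mathrm{tr}(F_i^\dagger F_j)=\delta_{ij}$, $F_{d^2}=\mathbb 1/\sqrt d$, other $F_i$ traceless; every generator decomposes uniquely as $\mathcal L[\rho]=-\mathrm i[H,\rho]+\sum_{i,j=1}^{d^2-1}\mathsf D_{ij}(F_i\rho F_j^\dagger-\frac12\{F_j^\dagger F_i,\rho\})$; it is of GKSL form if $\mathsf D\ge0$. A family of generators is physical if the family of maps $\Lambda_t$ solving $\dot\Lambda_t=\mathcal L_t\circ\Lambda_t$, $\Lambda_0=\mathrm{id}$, consists of CPTP maps. A family is commutative if $[\mathcal L_s,\mathcal L_t]=0$ for all $s,t$; then $\Lambda_t=\exp(\mathcal Z_t)$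 with $\mathcal Z_t=\int_0^t\mathcal L_\tau d\tau$. The dynamics is semigroup-simulable (SS) if $\mathcal Z_t$ is of GKSL form for all $t\ge0$; SSC means commutative and SS. Two physical families are additive if all non-negative linear combinations $\alpha\mathcal L^{(1)}_t+\beta\mathcal L^{(2)}_t$, $\alpha,\beta\ge0$, are physical. *)

theory Defs
  imports "HOL-Analysis.Analysis"
begin

text \<open>d x d complex matrices are modelled as complex^'d^'d (d = CARD('d)); superoperators
  (maps on d x d matrices) are functions on this type, a family of generators is
  a function real \<Rightarrow> superoperator, indexed by t \<ge> 0.\<close>

type_synonym 'd cmat = "complex^'d^'d"
type_synonym 'd superop = "'d cmat \<Rightarrow> 'd cmat"

definition adj :: "'d::finite cmat \<Rightarrow> 'd cmat" where
  "adj X = (\<chi> i j. cnj (X $ j $ i))"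

definition csmult :: "complex \<Rightarrow> 'd::finite cmat \<Rightarrow> 'd cmat" where
  "csmult c X = (\<chi> i j. c * X $ i $ j)"

definition complex_linear_map :: "'d::finite superop \<Rightarrow> bool" where
  "complex_linear_map L \<longleftrightarrow>
     (\<forall>X Y. L (X + Y) = L X + L Y) \<and> (\<forall>c X. L (csmult c X) = csmult c (L X))"

definition dyn_gen :: "'d::finite superop \<Rightarrow> bool" where
  "dyn_gen L \<longleftrightarrow> complex_linear_map L \<and> (\<forall>X. L (adj X) = adj (L X)) \<and> (\<forall>X. trace (L X) = 0)"

definition cinner :: "complex^'d \<Rightarrow> complex^'d \<Rightarrow> complex" where
  "cinner u w = (\<Sum>i\<in>UNIV. cnj (u $ i) * w $ i)"

text \<open>A k x k block matrix with blocks in M_d (i.e. an element of M_k \<otimes> M_d) is positive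
  semidefinite.\<close>
definition psd_block :: "nat \<Rightarrow> (nat \<Rightarrow> nat \<Rightarrow> 'd::finite cmat) \<Rightarrow> bool" where
  "psd_block k X \<longleftrightarrow> (\<forall>v :: nat \<Rightarrow> complex^'d.
     (let q = (\<Sum>a<k. \<Sum>b<k. cinner (v a) (X a b *v v b)) in Im q = 0 \<and> 0 \<le> Re q))"

definition completely_positive :: "'d::finite superop \<Rightarrow> bool" where
  "completely_positive \<Lambda> \<longleftrightarrow>
     complex_linear_map \<Lambda> \<and>
     (\<forall>k X. psd_block k X \<longrightarrow> psd_block k (\<lambda>a b. \<Lambda> (X a b)))"

definition trace_preserving :: "'d::finite superop \<Rightarrow> bool" where
  "trace_preserving \<Lambda> \<longleftrightarrow> (\<forall>X. trace (\<Lambda> X) = trace X)"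

definition CPTP :: "'d::finite superop \<Rightarrow> bool" where
  "CPTP \<Lambda> \<longleftrightarrow> completely_positive \<Lambda> \<and> trace_preserving \<Lambda>"

definition op_basis :: "(nat \<Rightarrow> 'd::finite cmat) \<Rightarrow> bool" where
  "op_basis F \<longleftrightarrow>
     (\<forall>i\<in>{1..CARD('d)^2}. \<forall>j\<in>{1..CARD('d)^2}. trace (adj (F i) ** F j) = (if i = j then 1 else 0)) \<and>
     F (CARD('d)^2) = csmult (complex_of_real (1 / sqrt (real CARD('d)))) (mat 1) \<and>
     (\<forall>i\<in>{1..CARD('d)^2 - 1}. trace (F i) = 0)"

definition psd_coeff :: "nat \<Rightarrow> (nat \<Rightarrow> nat \<Rightarrow> complex) \<Rightarrow> bool" where
  "psd_coeff n D \<longleftrightarrow> (\<forall>v :: nat \<Rightarrow> complex.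
     (let q = (\<Sum>i\<in>{1..n}. \<Sum>j\<in>{1..n}. cnj (v i) * D i j * v j) in Im q = 0 \<and> 0 \<le> Re q))"

definition hermitian :: "'d::finite cmat \<Rightarrow> bool" where
  "hermitian H \<longleftrightarrow> adj H = H"

definition lindblad_map :: "(nat \<Rightarrow> 'd::finite cmat) \<Rightarrow> 'd cmat \<Rightarrow> (nat \<Rightarrow> nat \<Rightarrow> complex) \<Rightarrow> 'd superop" where
  "lindblad_map F H D \<rho> =
     csmult (- \<i>) (H ** \<rho> - \<rho> ** H) +
     (\<Sum>i\<in>{1..CARD('d)^2 - 1}. \<Sum>j\<in>{1..CARD('d)^2 - 1}.
        csmult (D i j) (F i ** \<rho> ** adj (F j)
          - csmult (1/2) (adj (F j) ** F i ** \<rho> + \<rho> ** (adj (F j) ** F i))))"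

definition GKSL_form :: "(nat \<Rightarrow> 'd::finite cmat) \<Rightarrow> 'd superop \<Rightarrow> bool" where
  "GKSL_form F L \<longleftrightarrow> (\<exists>H D. hermitian H \<and> psd_coeff (CARD('d)^2 - 1) D \<and> L = lindblad_map F H D)"

text \<open>Z_t = int_0^t L_tau dtau (applied pointwise; the superoperators are linear).\<close>
definition Zint :: "(real \<Rightarrow> 'd::finite superop) \<Rightarrow> real \<Rightarrow> 'd superop" where
  "Zint L t \<rho> = integral {0..t} (\<lambda>\<tau>. L \<tau> \<rho>)"

definition superop_exp :: "'d::finite superop \<Rightarrow> 'd superop" where
  "superop_exp Z \<rho> = (\<Sum>n. (1 / fact n) *\<^sub>R (Z ^^ n) \<rho>)"

definition solves_master :: "(real \<Rightarrow> 'd::finite superop) \<Rightarrow> (real \<Rightarrow> 'd superop) \<Rightarrow> bool" where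
  "solves_master L \<Lambda> \<longleftrightarrow> \<Lambda> 0 = id \<and>
     (\<forall>t\<ge>0. \<forall>\<rho>. ((\<lambda>s. \<Lambda> s \<rho>) has_vector_derivative L t (\<Lambda> t \<rho>)) (at t within {0..}))"

definition physical :: "(real \<Rightarrow> 'd::finite superop) \<Rightarrow> bool" where
  "physical L \<longleftrightarrow> (\<exists>\<Lambda>. solves_master L \<Lambda>) \<and>
     (\<forall>\<Lambda>. solves_master L \<Lambda> \<longrightarrow> (\<forall>t\<ge>0. CPTP (\<Lambda> t)))"

definition commutative_family :: "(real \<Rightarrow> 'd::finite superop) \<Rightarrow> bool" where
  "commutative_family L \<longleftrightarrow> (\<forall>s\<ge>0. \<forall>t\<ge>0. L s \<circ> L t = L t \<circ> L s)"

definition semigroup_simulable :: "(nat \<Rightarrow> 'd::finite cmat) \<Rightarrow> (real \<Rightarrow> 'd superop) \<Rightarrow> bool" where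
  "semigroup_simulable F L \<longleftrightarrow> (\<forall>t\<ge>0. GKSL_form F (Zint L t))"

definition SSC :: "(nat \<Rightarrow> 'd::finite cmat) \<Rightarrow> (real \<Rightarrow> 'd superop) \<Rightarrow> bool" where
  "SSC F L \<longleftrightarrow> commutative_family L \<and> semigroup_simulable F L"

definition lin_comb :: "real \<Rightarrow> (real \<Rightarrow> 'd::finite superop) \<Rightarrow> real \<Rightarrow> (real \<Rightarrow> 'd superop) \<Rightarrow> real \<Rightarrow> 'd superop" where
  "lin_comb \<alpha> L1 \<beta> L2 t \<rho> = \<alpha> *\<^sub>R L1 t \<rho> + \<beta> *\<^sub>R L2 t \<rho>"

definition additive :: "(real \<Rightarrow> 'd::finite superop) \<Rightarrow> (real \<Rightarrow> 'd superop) \<Rightarrow> bool" where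
  "additive L1 L2 \<longleftrightarrow> (\<forall>\<alpha>\<ge>0. \<forall>\<beta>\<ge>0. physical (lin_comb \<alpha> L1 \<beta> L2))"

end

theory Submission
  imports Defs
begin

text \<open>
  For \<open>\<alpha>, \<beta> \<ge> 0\<close> the integrated generator of \<open>\<alpha> L\<^sub>1 + \<beta> L\<^sub>2\<close> is
  \<open>\<alpha> Z\<^sub>1(t) + \<beta> Z\<^sub>2(t)\<close>, and GKSL generators form a convex cone, so the combined family is
  again SSC. For a commuting continuous family, \<open>exp (Z(t))\<close> solves the master equation and,
  since \<open>exp (-Z(s)) \<Lambda>(s)\<close> has zero derivative, it is the only solution. Finally \<open>exp Z\<close> is
  CPTP when \<open>Z\<close> is a trace-annihilating GKSL generator: writing
  \<open>Z \<rho> = \<Phi> \<rho> + K \<rho> + \<rho> K\<^sup>*\<close> with \<open>\<Phi>\<close> completely positive,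
  \<open>exp Z\<close> is the limit of the \<open>n\<close>-th powers of the completely positive maps
  \<open>\<rho> \<mapsto> (1 + K/n) \<rho> (1 + K/n)\<^sup>* + \<Phi> \<rho> / n\<close>, which agree with \<open>1 + Z/n\<close> up to \<open>O(1/n\<^sup>2)\<close>.
\<close>

section \<open>Linear operators on a Euclidean space as a Banach algebra\<close>

text \<open>A copy of \<open>'a \<Rightarrow>\<^sub>L 'a\<close> with composition as multiplication, so that the library's
  \<open>exp\<close> on Banach algebras applies to superoperators.\<close>

typedef (overloaded) 'a endo = "UNIV :: ('a::euclidean_space \<Rightarrow>\<^sub>L 'a) set"
  morphisms blinfun_of_endo Endo by auto

setup_lifting type_definition_endo

instantiation endo :: (euclidean_space) real_normed_algebra_1
begin

lift_definition norm_endo :: "'a endo \<Rightarrow> real" is norm .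
lift_definition minus_endo :: "'a endo \<Rightarrow> 'a endo \<Rightarrow> 'a endo" is "(-)" .
lift_definition plus_endo :: "'a endo \<Rightarrow> 'a endo \<Rightarrow> 'a endo" is "(+)" .
lift_definition uminus_endo :: "'a endo \<Rightarrow> 'a endo" is uminus .
lift_definition zero_endo :: "'a endo" is 0 .
lift_definition scaleR_endo :: "real \<Rightarrow> 'a endo \<Rightarrow> 'a endo" is scaleR .
lift_definition times_endo :: "'a endo \<Rightarrow> 'a endo \<Rightarrow> 'a endo" is blinfun_compose .
lift_definition one_endo :: "'a endo" is id_blinfun .

definition dist_endo :: "'a endo \<Rightarrow> 'a endo \<Rightarrow> real"
  where "dist_endo a b = norm (a - b)"

definition uniformity_endo :: "('a endo \<times> 'a endo) filter"
  where "uniformity_endo = (INF e\<in>{0 <..}. principal {(x, y). dist x y < e})"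

definition open_endo :: "'a endo set \<Rightarrow> bool"
  where "open_endo S = (\<forall>x\<in>S. \<forall>\<^sub>F (x', y) in uniformity. x' = x \<longrightarrow> y \<in> S)"

definition sgn_endo :: "'a endo \<Rightarrow> 'a endo"
  where "sgn_endo x = inverse (norm x) *\<^sub>R x"

instance
proof
  fix x y z :: "'a endo" and a b :: real
  show "x + y + z = x + (y + z)" by transfer (simp add: algebra_simps)
  show "x + y = y + x" by transfer (simp add: algebra_simps)
  show "0 + x = x" by transfer simp
  show "- x + x = 0" by transfer simp
  show "x - y = x + - y" by transfer simp
  show "a *\<^sub>R (x + y) = a *\<^sub>R x + a *\<^sub>R y" by transfer (simp add: algebra_simps)
  show "(a + b) *\<^sub>R x = a *\<^sub>R x + b *\<^sub>R x" by transfer (simp add: algebra_simps)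
  show "a *\<^sub>R b *\<^sub>R x = (a * b) *\<^sub>R x" by transfer simp
  show "1 *\<^sub>R x = x" by transfer simp
  show "dist x y = norm (x - y)" by (simp add: dist_endo_def)
  show "sgn x = inverse (norm x) *\<^sub>R x" by (simp add: sgn_endo_def)
  show "(norm x = 0) = (x = 0)" by transfer simp
  show "norm (x + y) \<le> norm x + norm y" by transfer (rule norm_triangle_ineq)
  show "norm (a *\<^sub>R x) = \<bar>a\<bar> * norm x" by transfer simp
  show "x * y * z = x * (y * z)" by transfer (rule blinfun_eqI, simp)
  show "(x + y) * z = x * z + y * z" by transfer (rule blinfun_eqI, simp add: blinfun.bilinear_simps)
  show "x * (y + z) = x * y + x * z" by transfer (rule blinfun_eqI, simp add: blinfun.bilinear_simps)
  show "a *\<^sub>R x * y = a *\<^sub>R (x * y)" by transfer (rule blinfun_eqI, simp add: blinfun.bilinear_simps)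
  show "x * a *\<^sub>R y = a *\<^sub>R (x * y)" by transfer (rule blinfun_eqI, simp add: blinfun.bilinear_simps)
  show "1 * x = x" by transfer (rule blinfun_eqI, simp)
  show "x * 1 = x" by transfer (rule blinfun_eqI, simp)
  show "(0::'a endo) \<noteq> 1"
  proof transfer
    obtain v :: 'a where "v \<noteq> 0" using nonzero_Basis SOME_Basis by blast
    then show "(0::'a \<Rightarrow>\<^sub>L 'a) \<noteq> id_blinfun" by (metis blinfun.zero_left blinfun_apply_id_blinfun)
  qed
  show "norm (x * y) \<le> norm x * norm y" by transfer (rule norm_blinfun_compose)
  show "norm (1::'a endo) = 1" by transfer simp
  show "uniformity = (INF e\<in>{0<..}. principal {(x::'a endo, y). dist x y < e})"
    by (simp add: uniformity_endo_def)
  fix U :: "'a endo set"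
  show "open U = (\<forall>x\<in>U. \<forall>\<^sub>F (x', y) in uniformity. x' = x \<longrightarrow> y \<in> U)"
    by (simp add: open_endo_def)
qed

end

instance endo :: (euclidean_space) banach
proof
  fix X :: "nat \<Rightarrow> 'a endo"
  assume "Cauchy X"
  then have "Cauchy (\<lambda>n. blinfun_of_endo (X n))"
    unfolding Cauchy_def dist_norm by (simp add: norm_endo.rep_eq minus_endo.rep_eq)
  then obtain L where "(\<lambda>n. blinfun_of_endo (X n)) \<longlonglongrightarrow> L"
    using Cauchy_convergent convergent_def by blast
  then have "X \<longlonglongrightarrow> Endo L"
    unfolding LIMSEQ_iff dist_norm by (simp add: norm_endo.rep_eq minus_endo.rep_eq Endo_inverse)
  then show "convergent X" by (auto simp: convergent_def)
qed

definition endo_apply :: "'a::euclidean_space endo \<Rightarrow> 'a \<Rightarrow> 'a" where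
  "endo_apply x v = blinfun_apply (blinfun_of_endo x) v"

definition endo_of :: "('a::euclidean_space \<Rightarrow> 'a) \<Rightarrow> 'a endo" where
  "endo_of f = Endo (Blinfun f)"

lemma endo_apply_endo_of: "linear f \<Longrightarrow> endo_apply (endo_of f) = f"
  by (rule ext) (simp add: endo_apply_def endo_of_def Endo_inverse bounded_linear_Blinfun_apply
      linear_conv_bounded_linear)

lemma endo_eqI: "(\<And>v. endo_apply x v = endo_apply y v) \<Longrightarrow> x = y"
  unfolding endo_apply_def by (metis blinfun_eqI blinfun_of_endo_inject)

lemma endo_apply_simps [simp]:
  "endo_apply (x * y) v = endo_apply x (endo_apply y v)"
  "endo_apply 1 v = v"
  "endo_apply 0 v = 0"
  "endo_apply (x + y) v = endo_apply x v + endo_apply y v"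
  "endo_apply (x - y) v = endo_apply x v - endo_apply y v"
  "endo_apply (- x) v = - endo_apply x v"
  "endo_apply (r *\<^sub>R x) v = r *\<^sub>R endo_apply x v"
  by (simp_all add: endo_apply_def times_endo.rep_eq one_endo.rep_eq zero_endo.rep_eq
      plus_endo.rep_eq minus_endo.rep_eq uminus_endo.rep_eq scaleR_endo.rep_eq
      blinfun.bilinear_simps)

lemma bounded_bilinear_endo_apply: "bounded_bilinear endo_apply"
proof
  fix a a' :: "'a endo" and b b' :: 'a and r :: real
  show "endo_apply (a + a') b = endo_apply a b + endo_apply a' b" by simp
  show "endo_apply a (b + b') = endo_apply a b + endo_apply a b'"
    by (simp add: endo_apply_def blinfun.bilinear_simps)
  show "endo_apply (r *\<^sub>R a) b = r *\<^sub>R endo_apply a b" by simp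
  show "endo_apply a (r *\<^sub>R b) = r *\<^sub>R endo_apply a b"
    by (simp add: endo_apply_def blinfun.bilinear_simps)
  show "\<exists>K. \<forall>a b. norm (endo_apply a b) \<le> norm a * norm b * K"
    by (rule exI[of _ 1]) (simp add: endo_apply_def norm_endo.rep_eq norm_blinfun)
qed

interpretation endo_apply: bounded_bilinear endo_apply
  by (rule bounded_bilinear_endo_apply)

lemma endo_apply_power: "endo_apply (A ^ n) v = (endo_apply A ^^ n) v"
  by (induction n arbitrary: v) (simp_all only: power_Suc2 endo_apply_simps(1) funpow_Suc_right
      power_0 endo_apply_simps(2) funpow_0 o_apply)

lemma endo_apply_exp: "endo_apply (exp A) v = (\<Sum>n. (1 / fact n) *\<^sub>R (endo_apply A ^^ n) v)"
proof -
  have "endo_apply (exp A) v = (\<Sum>n. endo_apply (A ^ n /\<^sub>R fact n) v)"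
    unfolding exp_def
    using bounded_linear.suminf[OF endo_apply.bounded_linear_left summable_exp_generic] by simp
  then show ?thesis by (simp add: endo_apply_power divide_inverse_commute)
qed

lemma has_vector_derivative_endoI:
  fixes Y :: "real \<Rightarrow> 'a::euclidean_space endo"
  assumes "\<And>b. b \<in> Basis \<Longrightarrow>
    ((\<lambda>s. endo_apply (Y s) b) has_vector_derivative endo_apply Y' b) (at t within S)"
  shows "(Y has_vector_derivative Y') (at t within S)"
proof -
  define q where "q = (\<lambda>s. (1 / norm (s - t)) *\<^sub>R (Y s - (Y t + (s - t) *\<^sub>R Y')))"
  have "((\<lambda>s. (1 / norm (s - t)) *\<^sub>R (endo_apply (Y s) b - (endo_apply (Y t) b
      + (s - t) *\<^sub>R endo_apply Y' b))) \<longlongrightarrow> 0) (at t within S)" if "b \<in> Basis" for b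
    using assms[OF that] unfolding has_vector_derivative_def has_derivative_within by blast
  then have "((\<lambda>s. endo_apply (q s) b) \<longlongrightarrow> 0) (at t within S)" if "b \<in> Basis" for b
    using that by (simp add: q_def)
  then have lim: "((\<lambda>s. \<Sum>b\<in>Basis. norm (endo_apply (q s) b)) \<longlongrightarrow> 0) (at t within S)"
    by (intro tendsto_null_sum tendsto_norm_zero)
  have "norm (q s) \<le> (\<Sum>b\<in>Basis. norm (endo_apply (q s) b))" for s
    unfolding norm_endo.rep_eq endo_apply_def by (rule norm_blinfun_euclidean_le)
  then have "(q \<longlongrightarrow> 0) (at t within S)"
    using Lim_null_comparison[OF always_eventually lim] by blast
  then show ?thesis
    unfolding has_vector_derivative_def has_derivative_within q_def
    by (simp add: bounded_linear_scaleR_left)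
qed

section \<open>The exponential in a Banach algebra\<close>

lemma mult_exp_commute:
  fixes A B :: "'a::{real_normed_algebra_1,banach}"
  assumes "A * B = B * A"
  shows "B * exp A = exp A * B"
proof -
  have "B * A ^ n = A ^ n * B" for n
    using assms by (metis power_commuting_commutes)
  then have "B * exp A = (\<Sum>n. (A ^ n /\<^sub>R fact n) * B)"
    unfolding exp_def by (simp add: suminf_mult[symmetric, OF summable_exp_generic])
  also have "\<dots> = exp A * B"
    unfolding exp_def by (rule suminf_mult2[symmetric, OF summable_exp_generic])
  finally show ?thesis .
qed

lemma exp_of_nat_mult_algebra:
  fixes A :: "'a::{real_normed_algebra_1,banach}"
  shows "exp (of_nat n * A) = exp A ^ n"
proof (induction n)
  case (Suc n)
  have "exp (of_nat (Suc n) * A) = exp (A + of_nat n * A)"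
    by (simp add: algebra_simps)
  also have "\<dots> = exp A * exp (of_nat n * A)"
    by (rule exp_add_commuting) (simp add: mult_of_nat_commute algebra_simps)
  finally show ?case using Suc by simp
qed simp

lemma norm_exp_minus_one_minus_le:
  fixes h :: "'a::{real_normed_algebra_1,banach}"
  shows "norm (exp h - 1 - h) \<le> norm h ^ 2 * exp (norm h)"
proof -
  let ?f = "\<lambda>n. h ^ n /\<^sub>R fact n"
  have tail: "exp h - 1 - h = (\<Sum>n. ?f (n + 2))"
    using suminf_split_initial_segment[OF summable_exp_generic, of h 2]
    by (simp add: exp_def eval_nat_numeral)
  have summable_tail: "summable (\<lambda>n. norm (?f (n + 2)))"
    using summable_norm_exp by (subst summable_iff_shift)
  have term_le: "norm (?f (n + 2)) \<le> norm h ^ 2 * (norm h ^ n /\<^sub>R fact n)" for n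
  proof -
    have fact_le: "(fact n :: real) \<le> fact (n + 2)"
      by (rule fact_mono) simp
    have "norm (?f (n + 2)) = norm (h ^ (n + 2)) / fact (n + 2)"
      by (simp add: divide_inverse mult.commute)
    also have "\<dots> \<le> norm h ^ (n + 2) / fact (n + 2)"
      using norm_power_ineq[of h "n + 2"] by (simp add: divide_right_mono)
    also have "\<dots> \<le> norm h ^ (n + 2) / fact n"
      using fact_le by (simp add: frac_le)
    also have "\<dots> = norm h ^ 2 * (norm h ^ n /\<^sub>R fact n)"
      by (simp add: power_add divide_inverse algebra_simps power2_eq_square)
    finally show ?thesis .
  qed
  have "norm (\<Sum>n. ?f (n + 2)) \<le> (\<Sum>n. norm (?f (n + 2)))"
    by (rule summable_norm[OF summable_tail])
  also have "\<dots> \<le> (\<Sum>n. norm h ^ 2 * (norm h ^ n /\<^sub>R fact n))"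
    by (rule suminf_le[OF term_le summable_tail summable_mult[OF summable_exp_generic]])
  also have "\<dots> = norm h ^ 2 * exp (norm h)"
    unfolding exp_def by (rule suminf_mult[OF summable_exp_generic])
  finally show ?thesis using tail by simp
qed

lemma has_derivative_exp_at_0:
  "(exp has_derivative (\<lambda>x. x)) (at (0::'a::{real_normed_algebra_1,banach}))"
proof -
  have bound: "norm (exp h - 1 - h) / norm h \<le> norm h * exp (norm h)" for h :: 'a
  proof (cases "h = 0")
    case False
    then have "norm (exp h - 1 - h) / norm h \<le> norm h ^ 2 * exp (norm h) / norm h"
      by (simp add: divide_right_mono norm_exp_minus_one_minus_le)
    then show ?thesis
      using False by (simp add: power2_eq_square)
  qed simp
  have lim: "((\<lambda>h::'a. norm h * exp (norm h)) \<longlongrightarrow> 0) (at 0)"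
    by (rule tendsto_eq_intros | simp)+
  have "((\<lambda>h::'a. norm (exp h - 1 - h) / norm h) \<longlongrightarrow> 0) (at 0)"
    by (rule Lim_null_comparison[OF always_eventually lim]) (simp add: bound)
  then show ?thesis
    unfolding has_derivative_at by simp
qed

lemma has_vector_derivative_exp_commuting:
  fixes Z :: "real \<Rightarrow> 'a::{real_normed_algebra_1,banach}"
  assumes deriv: "(Z has_vector_derivative Z') (at t within S)"
    and commute: "\<And>s. s \<in> S \<Longrightarrow> Z s * Z t = Z t * Z s" and "t \<in> S"
  shows "((\<lambda>s. exp (Z s)) has_vector_derivative exp (Z t) * Z') (at t within S)"
proof -
  have inner: "((\<lambda>s. Z s - Z t) has_derivative (\<lambda>x. x *\<^sub>R Z')) (at t within S)"
    using deriv unfolding has_vector_derivative_def by (auto intro!: derivative_eq_intros)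
  have outer: "(exp has_derivative (\<lambda>x. x)) (at ((\<lambda>s. Z s - Z t) t) within (\<lambda>s. Z s - Z t) ` S)"
    by (simp add: has_derivative_at_withinI has_derivative_exp_at_0)
  have "((\<lambda>s. exp (Z s - Z t)) has_derivative (\<lambda>x. x *\<^sub>R Z')) (at t within S)"
    using diff_chain_within[OF inner outer] by (simp add: o_def)
  then have shifted: "((\<lambda>s. exp (Z t) * exp (Z s - Z t)) has_derivative
      (\<lambda>x. exp (Z t) * (x *\<^sub>R Z'))) (at t within S)"
    by (rule has_derivative_mult_right)
  have shift: "exp (Z t) * exp (Z s - Z t) = exp (Z s)" if "s \<in> S" for s
  proof -
    have "Z t * (Z s - Z t) = (Z s - Z t) * Z t"
      using commute[OF that] by (simp add: algebra_simps)
    then show ?thesis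
      using exp_add_commuting[of "Z t" "Z s - Z t"] by simp
  qed
  have "((\<lambda>s. exp (Z s)) has_derivative (\<lambda>x. exp (Z t) * (x *\<^sub>R Z'))) (at t within S)"
    by (rule has_derivative_transform_within[OF shifted zero_less_one \<open>t \<in> S\<close>]) (simp add: shift)
  then show ?thesis
    unfolding has_vector_derivative_def by (simp add: mult_scaleR_right)
qed

lemma norm_power_diff_le:
  fixes a b :: "'a::real_normed_algebra_1"
  assumes a: "norm a \<le> M" and b: "norm b \<le> M"
  shows "norm (a ^ n - b ^ n) \<le> real n * M ^ (n - 1) * norm (a - b)"
proof (induction n)
  case (Suc n)
  have "0 \<le> M" using a norm_ge_zero order_trans by blast
  have norm_bn: "norm (b ^ n) \<le> M ^ n"
    using norm_power_ineq[of b n] power_mono[OF b, of n] by simp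
  have "norm (a ^ Suc n - b ^ Suc n) = norm (a * (a ^ n - b ^ n) + (a - b) * b ^ n)"
    by (simp add: algebra_simps)
  also have "\<dots> \<le> norm a * norm (a ^ n - b ^ n) + norm (a - b) * norm (b ^ n)"
    by (intro norm_triangle_le add_mono norm_mult_ineq)
  also have "\<dots> \<le> M * (real n * M ^ (n - 1) * norm (a - b)) + norm (a - b) * M ^ n"
    using Suc a norm_bn \<open>0 \<le> M\<close> by (intro add_mono mult_mono mult_left_mono) simp_all
  also have "\<dots> = real (Suc n) * M ^ (Suc n - 1) * norm (a - b)"
    by (cases n) (simp_all add: algebra_simps)
  finally show ?case .
qed simp

lemma exp_scaleR_inverse_power:
  fixes Z :: "'a::{real_normed_algebra_1,banach}"
  assumes "n > 0"
  shows "exp ((1 / real n) *\<^sub>R Z) ^ n = exp Z"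
proof -
  have "(of_nat n :: 'a) * ((1 / real n) *\<^sub>R Z) = (1 / real n) *\<^sub>R (of_nat n * Z)"
    by (simp add: mult_scaleR_right)
  also have "(of_nat n :: 'a) * Z = real n *\<^sub>R Z"
    by (simp add: scaleR_conv_of_real)
  finally have "(of_nat n :: 'a) * ((1 / real n) *\<^sub>R Z) = Z"
    using assms by simp
  then show ?thesis
    using exp_of_nat_mult_algebra by metis
qed

lemma norm_exp_scaleR_inverse_minus_le:
  fixes Z :: "'a::{real_normed_algebra_1,banach}"
  assumes "n \<ge> 1"
  shows "norm (exp ((1 / real n) *\<^sub>R Z) - (1 + (1 / real n) *\<^sub>R Z)) \<le> (norm Z / real n)\<^sup>2 * exp (norm Z)"
proof -
  have "norm (exp ((1 / real n) *\<^sub>R Z) - (1 + (1 / real n) *\<^sub>R Z))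
      \<le> (norm Z / real n)\<^sup>2 * exp (norm Z / real n)"
    using norm_exp_minus_one_minus_le[of "(1 / real n) *\<^sub>R Z"] assms by (simp add: diff_diff_eq)
  also have "\<dots> \<le> (norm Z / real n)\<^sup>2 * exp (norm Z)"
    using assms by (intro mult_left_mono) (simp_all add: divide_le_eq mult_le_cancel_left1)
  finally show ?thesis .
qed

text \<open>Both \<open>A\<close> and \<open>exp (Z/n)\<close> have norm at most \<open>exp (K/n)\<close>, so \<open>A\<^sup>n\<close> and
  \<open>exp Z = exp (Z/n)\<^sup>n\<close> differ by at most \<open>n exp K\<close> times their \<open>O(1/n\<^sup>2)\<close> distance.\<close>

lemma norm_power_minus_exp_le:
  fixes A Z :: "'a::{real_normed_algebra_1,banach}"
  assumes "0 \<le> C" and "n \<ge> 1"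
    and A: "norm (A - (1 + (1 / real n) *\<^sub>R Z)) \<le> C / (real n)\<^sup>2"
  shows "norm (A ^ n - exp Z) \<le> exp (norm Z + C) * (C + (norm Z)\<^sup>2 * exp (norm Z)) / real n"
proof -
  define K where "K = norm Z + C"
  define E where "E = exp ((1 / real n) *\<^sub>R Z)"
  have n: "real n > 0" "real n \<le> (real n)\<^sup>2"
    using \<open>n \<ge> 1\<close> by (simp_all add: power2_eq_square)
  have norm_Zn: "norm ((1 / real n) *\<^sub>R Z) = norm Z / real n"
    using n by simp
  have En: "E ^ n = exp Z"
    unfolding E_def using \<open>n \<ge> 1\<close> by (simp add: exp_scaleR_inverse_power)
  have "norm (A - E) \<le> norm (A - (1 + (1 / real n) *\<^sub>R Z)) + norm (E - (1 + (1 / real n) *\<^sub>R Z))"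
    using norm_triangle_ineq4[of "A - (1 + (1 / real n) *\<^sub>R Z)" "E - (1 + (1 / real n) *\<^sub>R Z)"]
    by simp
  also have "\<dots> \<le> C / (real n)\<^sup>2 + (norm Z / real n)\<^sup>2 * exp (norm Z)"
    unfolding E_def by (rule add_mono[OF A norm_exp_scaleR_inverse_minus_le[OF \<open>n \<ge> 1\<close>]])
  finally have dist_AE: "norm (A - E) \<le> (C + (norm Z)\<^sup>2 * exp (norm Z)) / (real n)\<^sup>2"
    by (simp add: power_divide add_divide_distrib)
  have "norm A \<le> norm (1 + (1 / real n) *\<^sub>R Z) + C / (real n)\<^sup>2"
    using A norm_triangle_sub[of A "1 + (1 / real n) *\<^sub>R Z"] by simp
  also have "\<dots> \<le> 1 + norm Z / real n + C / real n"
    using norm_triangle_ineq[of 1 "(1 / real n) *\<^sub>R Z"] norm_Zn \<open>0 \<le> C\<close> n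
    by (intro add_mono) (simp_all add: divide_left_mono)
  also have "\<dots> = 1 + K / real n"
    by (simp add: K_def add_divide_distrib)
  also have "\<dots> \<le> exp (K / real n)"
    by (rule exp_ge_add_one_self)
  finally have norm_A: "norm A \<le> exp (K / real n)" .
  have "norm E \<le> exp (norm Z / real n)"
    using norm_exp[of "(1 / real n) *\<^sub>R Z"] norm_Zn by (simp add: E_def)
  also have "\<dots> \<le> exp (K / real n)"
    using \<open>0 \<le> C\<close> n by (simp add: K_def divide_right_mono)
  finally have norm_E: "norm E \<le> exp (K / real n)" .
  have "exp (K / real n) ^ (n - 1) \<le> exp (K / real n) ^ n"
    using \<open>0 \<le> C\<close> by (intro power_increasing) (simp_all add: K_def)
  also have "\<dots> = exp K"
    using n by (simp add: exp_of_nat_mult[symmetric])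
  finally have "exp (K / real n) ^ (n - 1) \<le> exp K" .
  have "norm (A ^ n - exp Z) \<le> real n * exp (K / real n) ^ (n - 1) * norm (A - E)"
    unfolding En[symmetric] by (rule norm_power_diff_le[OF norm_A norm_E])
  also have "\<dots> \<le> real n * exp K * ((C + (norm Z)\<^sup>2 * exp (norm Z)) / (real n)\<^sup>2)"
    using \<open>exp (K / real n) ^ (n - 1) \<le> exp K\<close> dist_AE by (intro mult_mono) simp_all
  also have "\<dots> = exp K * (C + (norm Z)\<^sup>2 * exp (norm Z)) / real n"
    using n by (simp add: power2_eq_square)
  finally show ?thesis by (simp add: K_def)
qed

lemma tendsto_power_exp:
  fixes A :: "nat \<Rightarrow> 'a::{real_normed_algebra_1,banach}"
  assumes "0 \<le> C" and "\<And>n. n \<ge> 1 \<Longrightarrow> norm (A n - (1 + (1 / real n) *\<^sub>R Z)) \<le> C / (real n)\<^sup>2"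
  shows "(\<lambda>n. A n ^ n) \<longlonglongrightarrow> exp Z"
proof -
  let ?c = "exp (norm Z + C) * (C + (norm Z)\<^sup>2 * exp (norm Z))"
  have "norm (A n ^ n - exp Z) \<le> ?c / real n" if "1 \<le> n" for n
    using norm_power_minus_exp_le[OF assms(1) that assms(2)[OF that]] by simp
  then have "\<forall>\<^sub>F n in sequentially. norm (A n ^ n - exp Z) \<le> ?c / real n"
    by (rule eventually_mono[OF eventually_ge_at_top])
  then have "(\<lambda>n. A n ^ n - exp Z) \<longlonglongrightarrow> 0"
    by (rule Lim_null_comparison) (rule lim_const_over_n)
  then show ?thesis
    by (simp add: LIM_zero_iff)
qed

section \<open>Positive semidefinite coefficient matrices\<close>

definition quad_form :: "nat set \<Rightarrow> (nat \<Rightarrow> nat \<Rightarrow> complex) \<Rightarrow> (nat \<Rightarrow> complex) \<Rightarrow> complex" where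
  "quad_form S D v = (\<Sum>i\<in>S. \<Sum>j\<in>S. cnj (v i) * D i j * v j)"

definition psd_on :: "nat set \<Rightarrow> (nat \<Rightarrow> nat \<Rightarrow> complex) \<Rightarrow> bool" where
  "psd_on S D \<longleftrightarrow> (\<forall>v. Im (quad_form S D v) = 0 \<and> 0 \<le> Re (quad_form S D v))"

lemma psd_coeff_iff_psd_on: "psd_coeff n D \<longleftrightarrow> psd_on {1..n} D"
  by (simp add: psd_coeff_def psd_on_def quad_form_def)

lemma quad_form_cong: "(\<And>i. i \<in> S \<Longrightarrow> v i = w i) \<Longrightarrow> quad_form S D v = quad_form S D w"
  unfolding quad_form_def by (intro sum.cong refl) auto

lemma quad_form_support:
  assumes "finite S" "T \<subseteq> S" "\<And>l. l \<in> S - T \<Longrightarrow> v l = 0"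
  shows "quad_form S D v = quad_form T D v"
proof -
  have "quad_form S D v = (\<Sum>i\<in>T. \<Sum>j\<in>S. cnj (v i) * D i j * v j)"
    unfolding quad_form_def by (rule sum.mono_neutral_right) (use assms in auto)
  also have "\<dots> = quad_form T D v"
    unfolding quad_form_def
    by (rule sum.cong[OF refl], rule sum.mono_neutral_right) (use assms in auto)
  finally show ?thesis .
qed

lemma quad_form_insert:
  assumes "finite S" "x \<notin> S"
  shows "quad_form (insert x S) D v = cnj (v x) * D x x * v x + cnj (v x) * (\<Sum>j\<in>S. D x j * v j)
     + (\<Sum>i\<in>S. cnj (v i) * D i x) * v x + quad_form S D v"
  using assms
  by (simp add: quad_form_def sum.distrib sum_distrib_left sum_distrib_right algebra_simps)

lemma quad_form_two:
  assumes "finite S" "i \<in> S" "j \<in> S" "i \<noteq> j"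
  shows "quad_form S D (\<lambda>l. if l = i then 1 else if l = j then z else 0)
       = D i i + z * D i j + cnj z * D j i + cnj z * z * D j j"
proof -
  have "quad_form S D (\<lambda>l. if l = i then 1 else if l = j then z else 0)
      = quad_form {i, j} D (\<lambda>l. if l = i then 1 else if l = j then z else 0)"
    by (rule quad_form_support) (use assms in auto)
  also have "\<dots> = D i i + z * D i j + cnj z * D j i + cnj z * z * D j j"
    using assms by (simp add: quad_form_def algebra_simps)
  finally show ?thesis .
qed

lemma psd_on_lin_comb:
  assumes "psd_on S D1" "psd_on S D2" "a \<ge> 0" "b \<ge> 0"
  shows "psd_on S (\<lambda>i j. complex_of_real a * D1 i j + complex_of_real b * D2 i j)"
  unfolding psd_on_def
proof
  fix v
  have "quad_form S (\<lambda>i j. complex_of_real a * D1 i j + complex_of_real b * D2 i j) v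
      = complex_of_real a * quad_form S D1 v + complex_of_real b * quad_form S D2 v"
    by (simp add: quad_form_def algebra_simps sum.distrib sum_distrib_left)
  then show "Im (quad_form S (\<lambda>i j. complex_of_real a * D1 i j + complex_of_real b * D2 i j) v) = 0 \<and>
      0 \<le> Re (quad_form S (\<lambda>i j. complex_of_real a * D1 i j + complex_of_real b * D2 i j) v)"
    using assms by (simp add: psd_on_def)
qed

lemma psd_on_subset:
  assumes "psd_on S D" "finite S" "T \<subseteq> S"
  shows "psd_on T D"
  unfolding psd_on_def
proof
  fix v
  have "quad_form T D v = quad_form T D (\<lambda>l. if l \<in> T then v l else 0)"
    by (rule quad_form_cong) simp
  also have "\<dots> = quad_form S D (\<lambda>l. if l \<in> T then v l else 0)"
    by (rule quad_form_support[symmetric]) (use assms in auto)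
  finally show "Im (quad_form T D v) = 0 \<and> 0 \<le> Re (quad_form T D v)"
    using assms(1) by (simp add: psd_on_def)
qed

lemma psd_on_diag:
  assumes "psd_on S D" "finite S" "i \<in> S"
  shows "Im (D i i) = 0" "0 \<le> Re (D i i)"
proof -
  have "psd_on {i} D"
    using psd_on_subset[OF assms(1,2)] assms(3) by simp
  moreover have "quad_form {i} D (\<lambda>_. 1) = D i i"
    by (simp add: quad_form_def)
  ultimately show "Im (D i i) = 0" "0 \<le> Re (D i i)"
    unfolding psd_on_def by metis+
qed

lemma psd_on_hermitian:
  assumes psd: "psd_on S D" and S: "finite S" "i \<in> S" "j \<in> S"
  shows "D j i = cnj (D i j)"
proof (cases "i = j")
  case True
  then show ?thesis using psd_on_diag[OF psd S(1,2)] by (simp add: complex_eq_iff)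
next
  case False
  have diag: "Im (D i i) = 0" "Im (D j j) = 0"
    using psd_on_diag[OF psd S(1)] S by auto
  have "Im (quad_form S D (\<lambda>l. if l = i then 1 else if l = j then z else 0)) = 0" for z
    using psd by (simp add: psd_on_def)
  from this[of 1] this[of \<i>] have "Im (D i j) + Im (D j i) = 0" "Re (D i j) - Re (D j i) = 0"
    using diag quad_form_two[OF S False, of D 1] quad_form_two[OF S False, of D \<i>] by simp_all
  then show ?thesis by (simp add: complex_eq_iff)
qed

text \<open>Testing with \<open>v = e\<^sub>j + z e\<^sub>x\<close> for \<open>z = -t D\<^sub>x\<^sub>j\<close> and \<open>t\<close> large makes the quadratic form
  negative unless \<open>D\<^sub>x\<^sub>j = 0\<close>.\<close>

lemma psd_on_zero_diag_row:
  assumes psd: "psd_on S D" and S: "finite S" "x \<in> S" "j \<in> S" and zero: "D x x = 0"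
  shows "D x j = 0"
proof (rule ccontr)
  assume "D x j \<noteq> 0"
  then have "j \<noteq> x" using zero by auto
  define c where "c = D x j"
  define n where "n = (Re c)\<^sup>2 + (Im c)\<^sup>2"
  have "n > 0" using \<open>D x j \<noteq> 0\<close> by (simp add: n_def c_def complex_eq_iff sum_power2_gt_zero_iff)
  define t where "t = (Re (D j j) + 1) / (2 * n)"
  define z where "z = - (complex_of_real t * c)"
  have "D j x = cnj c" using psd_on_hermitian[OF psd S] by (simp add: c_def)
  have "0 \<le> Re (quad_form S D (\<lambda>l. if l = j then 1 else if l = x then z else 0))"
    using psd unfolding psd_on_def by blast
  also have "quad_form S D (\<lambda>l. if l = j then 1 else if l = x then z else 0)
      = D j j + z * D j x + cnj z * D x j + cnj z * z * D x x"
    by (rule quad_form_two) (use S \<open>j \<noteq> x\<close> in auto)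
  finally have "0 \<le> Re (D j j) - 2 * t * n"
    using zero \<open>D j x = cnj c\<close>
    by (simp add: z_def c_def[symmetric] n_def power2_eq_square algebra_simps)
  moreover have "2 * t * n = Re (D j j) + 1" using \<open>n > 0\<close> by (simp add: t_def)
  ultimately show False by simp
qed

lemma quad_form_schur_complement:
  assumes "finite S" "x \<notin> S" "D x x \<noteq> 0" "cnj (D x x) = D x x"
    and herm: "\<And>j. j \<in> S \<Longrightarrow> D j x = cnj (D x j)"
  shows "quad_form S (\<lambda>i j. D i j - D i x * D x j / D x x) v
    = quad_form (insert x S) D (v(x := - (\<Sum>j\<in>S. D x j * v j) / D x x))"
proof -
  define d where "d = D x x"
  define s where "s = (\<Sum>j\<in>S. D x j * v j)"
  define a where "a = - s / d"
  have cs: "(\<Sum>i\<in>S. cnj (v i) * D i x) = cnj s"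
    unfolding s_def cnj_sum by (rule sum.cong) (simp_all add: herm mult.commute)
  have "quad_form (insert x S) D (v(x := a)) = cnj a * d * a + cnj a * s + cnj s * a
      + quad_form S D v"
  proof -
    have "quad_form S D (v(x := a)) = quad_form S D v"
      by (rule quad_form_cong) (use assms in auto)
    moreover have "(\<Sum>j\<in>S. D x j * (v(x := a)) j) = s"
      unfolding s_def by (rule sum.cong) (use assms in auto)
    moreover have "(\<Sum>i\<in>S. cnj ((v(x := a)) i) * D i x) = cnj s"
      unfolding cs[symmetric] by (rule sum.cong) (use assms in auto)
    ultimately show ?thesis
      using assms(1,2) by (simp add: quad_form_insert d_def)
  qed
  also have "cnj a * d * a + cnj a * s + cnj s * a = - (cnj s * s / d)"
    using assms(3,4) by (simp add: a_def d_def field_simps)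
  finally have extended: "quad_form (insert x S) D (v(x := a)) = - (cnj s * s / d) + quad_form S D v" .
  have "quad_form S (\<lambda>i j. D i j - D i x * D x j / D x x) v
      = (\<Sum>i\<in>S. \<Sum>j\<in>S. cnj (v i) * D i j * v j - cnj (v i) * D i x * (D x j * v j) / d)"
    unfolding quad_form_def d_def
    by (rule sum.cong[OF refl], rule sum.cong[OF refl]) (simp add: algebra_simps diff_divide_distrib)
  also have "\<dots> = quad_form S D v - (\<Sum>i\<in>S. \<Sum>j\<in>S. cnj (v i) * D i x * (D x j * v j) / d)"
    by (simp add: quad_form_def sum_subtractf)
  also have "(\<Sum>i\<in>S. \<Sum>j\<in>S. cnj (v i) * D i x * (D x j * v j) / d)
      = (\<Sum>i\<in>S. cnj (v i) * D i x) * s / d"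
    by (simp add: s_def sum_product sum_divide_distrib mult.assoc)
  finally have "quad_form S (\<lambda>i j. D i j - D i x * D x j / D x x) v
      = quad_form (insert x S) D (v(x := a))"
    by (simp add: extended cs)
  then show ?thesis
    by (simp add: a_def s_def d_def)
qed

text \<open>For \<open>D\<^sub>x\<^sub>x = 0\<close> the Schur complement degenerates to \<open>D\<close> itself, as \<open>a / 0 = 0\<close>.\<close>

lemma psd_on_schur_complement:
  assumes "finite S" "x \<notin> S" and psd: "psd_on (insert x S) D"
  shows "psd_on S (\<lambda>i j. D i j - D i x * D x j / D x x)"
proof (cases "D x x = 0")
  case True
  then show ?thesis
    using psd_on_subset[OF psd _ subset_insertI] \<open>finite S\<close> by simp
next
  case False
  have fin: "finite (insert x S)"
    using \<open>finite S\<close> by simp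
  have "cnj (D x x) = D x x"
    using psd_on_diag(1)[OF psd fin insertI1] by (simp add: complex_eq_iff)
  moreover have "D j x = cnj (D x j)" if "j \<in> S" for j
    using psd_on_hermitian[OF psd fin insertI1 insertI2[OF that]] .
  ultimately have "quad_form S (\<lambda>i j. D i j - D i x * D x j / D x x) v
      = quad_form (insert x S) D (v(x := - (\<Sum>j\<in>S. D x j * v j) / D x x))" for v
    by (rule quad_form_schur_complement[of S x D, OF assms(1,2) False])
  then show ?thesis
    using psd by (simp add: psd_on_def)
qed

text \<open>Cholesky-type factorisation, splitting off the rank-one part \<open>u u\<^sup>*\<close> with
  \<open>u\<^sub>i = D\<^sub>i\<^sub>x / \<surd>D\<^sub>x\<^sub>x\<close> and recursing on the Schur complement.\<close>

lemma psd_on_gram: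
  assumes "finite S" "psd_on S D"
  shows "\<exists>W (m::nat). \<forall>i\<in>S. \<forall>j\<in>S. D i j = (\<Sum>k<m. W k i * cnj (W k j))"
  using assms
proof (induction S arbitrary: D rule: finite_induct)
  case empty
  show ?case by auto
next
  case (insert x S)
  have fin: "finite (insert x S)" using insert.hyps by simp
  define d where "d = D x x"
  define r where "r = complex_of_real (sqrt (Re d))"
  have "Im d = 0" "0 \<le> Re d"
    using psd_on_diag[OF insert.prems fin] by (auto simp: d_def)
  then have "r * r = d"
    by (simp add: r_def complex_eq_iff flip: of_real_mult)
  have herm: "D j i = cnj (D i j)" if "i \<in> insert x S" "j \<in> insert x S" for i j
    using psd_on_hermitian[OF insert.prems fin that] .
  define u where "u i = D i x / r" for i
  have rank_one: "u i * cnj (u j) = D i x * D x j / d" if "j \<in> insert x S" for i j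
    using herm[OF _ that, of x] \<open>r * r = d\<close> by (simp add: u_def r_def)
  have row: "D x j = D x x * D x j / d" and col: "D j x = D j x * D x x / d"
    if "j \<in> insert x S" for j
    using psd_on_zero_diag_row[OF insert.prems fin _ that] herm[OF that, of x]
    by (cases "d = 0"; auto simp: d_def)+
  obtain W and m :: nat
    where W: "\<forall>i\<in>S. \<forall>j\<in>S. D i j - D i x * D x j / d = (\<Sum>k<m. W k i * cnj (W k j))"
    using insert.IH[OF psd_on_schur_complement[OF insert.hyps insert.prems]] by (auto simp: d_def)
  define W' where "W' k i = (if k = 0 then u i else if i = x then 0 else W (k - 1) i)" for k i
  have "D i j = (\<Sum>k<Suc m. W' k i * cnj (W' k j))" if "i \<in> insert x S" "j \<in> insert x S" for i j
  proof -
    have "(\<Sum>k<Suc m. W' k i * cnj (W' k j))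
        = u i * cnj (u j) + (\<Sum>k<m. W' (Suc k) i * cnj (W' (Suc k) j))"
      by (simp only: sum.lessThan_Suc_shift) (simp add: W'_def)
    also have "\<dots> = D i j"
    proof (cases "i = x \<or> j = x")
      case True
      then show ?thesis
        using row[OF that(2)] col[OF that(1)] rank_one[OF that(2)] by (auto simp: W'_def d_def)
    next
      case False
      then show ?thesis
        using rank_one[OF that(2)] that insert.hyps by (auto simp: W'_def W[rule_format, symmetric])
    qed
    finally show ?thesis ..
  qed
  then show ?case by blast
qed

section \<open>Matrix algebra\<close>

lemma csmult_0 [simp]: "csmult c 0 = 0" "csmult 0 X = 0"
  by (simp_all add: csmult_def vec_eq_iff)

lemma csmult_of_real: "csmult (complex_of_real r) X = r *\<^sub>R X"
  by (simp add: csmult_def vec_eq_iff) (simp add: scaleR_conv_of_real)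

lemma csmult_of_real_mult: "csmult (complex_of_real r * c) X = r *\<^sub>R csmult c X"
  by (simp add: csmult_def vec_eq_iff) (simp add: scaleR_conv_of_real mult.assoc)

lemma csmult_add_right: "csmult c (X + Y) = csmult c X + csmult c Y"
  by (simp add: csmult_def vec_eq_iff algebra_simps)

lemma csmult_diff_right: "csmult c (X - Y) = csmult c X - csmult c Y"
  by (simp add: csmult_def vec_eq_iff algebra_simps)

lemma csmult_minus_right: "csmult c (- X) = - csmult c X"
  by (simp add: csmult_def vec_eq_iff)

lemma csmult_add_left: "csmult (a + b) X = csmult a X + csmult b X"
  by (simp add: csmult_def vec_eq_iff algebra_simps)

lemma csmult_minus_left: "csmult (- c) X = - csmult c X"
  by (simp add: csmult_def vec_eq_iff)

lemma csmult_csmult: "csmult a (csmult b X) = csmult (a * b) X"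
  by (simp add: csmult_def vec_eq_iff algebra_simps)

lemma csmult_scaleR: "csmult c (r *\<^sub>R X) = r *\<^sub>R csmult c X"
  by (simp add: csmult_def vec_eq_iff algebra_simps scaleR_conv_of_real)

lemma csmult_sum_right: "csmult c (sum f S) = (\<Sum>i\<in>S. csmult c (f i))"
  by (induction S rule: infinite_finite_induct) (simp_all add: csmult_add_right)

lemma csmult_sum_left: "csmult (sum f S) X = (\<Sum>i\<in>S. csmult (f i) X)"
  by (induction S rule: infinite_finite_induct) (simp_all add: csmult_add_left)

lemma bounded_linear_csmult: "bounded_linear (csmult c :: 'd::finite cmat \<Rightarrow> 'd cmat)"
  unfolding linear_conv_bounded_linear[symmetric]
  by (rule linearI) (simp_all add: csmult_add_right csmult_scaleR)

lemma matrix_mul_add_left: "(A + B) ** C = A ** C + B ** (C::'a::semiring_1^'n^'n)"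
  by (simp add: matrix_matrix_mult_def vec_eq_iff distrib_right sum.distrib)

lemma matrix_mul_diff_left: "(A - B) ** C = A ** C - B ** (C::'a::ring_1^'n^'n)"
  by (simp add: matrix_matrix_mult_def vec_eq_iff left_diff_distrib sum_subtractf)

lemma matrix_mul_diff_right: "C ** (A - B) = C ** A - C ** (B::'a::ring_1^'n^'n)"
  by (simp add: matrix_matrix_mult_def vec_eq_iff right_diff_distrib sum_subtractf)

lemma matrix_mul_minus_left: "(- A) ** B = - (A ** (B::'a::ring_1^'n^'n))"
  by (simp add: matrix_matrix_mult_def vec_eq_iff sum_negf)

lemma matrix_mul_minus_right: "A ** (- B) = - (A ** (B::'a::ring_1^'n^'n))"
  by (simp add: matrix_matrix_mult_def vec_eq_iff sum_negf)

lemma matrix_mul_sum_left: "sum f S ** (C::'d::finite cmat) = (\<Sum>i\<in>S. f i ** C)"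
  by (induction S rule: infinite_finite_induct) (simp_all add: matrix_mul_add_left)

lemma matrix_mul_sum_right: "(C::'d::finite cmat) ** sum f S = (\<Sum>i\<in>S. C ** f i)"
  by (induction S rule: infinite_finite_induct) (simp_all add: matrix_add_ldistrib)

lemma matrix_mul_csmult_left: "csmult c A ** B = csmult c (A ** (B::'d::finite cmat))"
  by (simp add: matrix_matrix_mult_def csmult_def vec_eq_iff sum_distrib_left mult.assoc)

lemma matrix_mul_csmult_right: "A ** csmult c B = csmult c (A ** (B::'d::finite cmat))"
  by (simp add: matrix_matrix_mult_def csmult_def vec_eq_iff sum_distrib_left mult.left_commute)

lemma matrix_mul_scaleR_right: "A ** (r *\<^sub>R B) = r *\<^sub>R (A ** (B::'d::finite cmat))"
  by (simp add: matrix_scalar_ac scalar_matrix_assoc)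

lemmas matrix_mul_simps = matrix_mul_add_left matrix_add_ldistrib matrix_mul_diff_left
  matrix_mul_diff_right matrix_mul_minus_left matrix_mul_minus_right matrix_mul_sum_left
  matrix_mul_sum_right matrix_mul_csmult_left matrix_mul_csmult_right
  scalar_matrix_assoc[symmetric] matrix_mul_scaleR_right

lemma adj_adj [simp]: "adj (adj X) = X"
  by (simp add: adj_def vec_eq_iff)

lemma adj_zero [simp]: "adj (0::'d::finite cmat) = 0"
  by (simp add: adj_def vec_eq_iff)

lemma adj_mat_1 [simp]: "adj (mat 1 :: 'd::finite cmat) = mat 1"
  by (simp add: adj_def mat_def vec_eq_iff)

lemma adj_add: "adj (X + Y) = adj X + adj Y"
  by (simp add: adj_def vec_eq_iff)

lemma adj_diff: "adj (X - Y) = adj X - adj Y"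
  by (simp add: adj_def vec_eq_iff)

lemma adj_csmult: "adj (csmult c X) = csmult (cnj c) (adj X)"
  by (simp add: adj_def csmult_def vec_eq_iff)

lemma adj_scaleR: "adj (r *\<^sub>R X) = r *\<^sub>R adj X"
  by (simp add: adj_def vec_eq_iff)

lemma adj_sum: "adj (sum f S) = (\<Sum>i\<in>S. adj (f i))"
  by (induction S rule: infinite_finite_induct) (simp_all add: adj_add)

lemma adj_matrix_mul: "adj (X ** Y) = adj Y ** adj (X::'d::finite cmat)"
  by (simp add: adj_def matrix_matrix_mult_def vec_eq_iff mult.commute)

lemma conj_mat_1_plus_scaleR:
  fixes K :: "'d::finite cmat"
  shows "(mat 1 + c *\<^sub>R K) ** \<rho> ** adj (mat 1 + c *\<^sub>R K)
    = \<rho> + c *\<^sub>R (K ** \<rho>) + c *\<^sub>R (\<rho> ** adj K) + c\<^sup>2 *\<^sub>R (K ** \<rho> ** adj K)"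
proof -
  have "(mat 1 + c *\<^sub>R K) ** \<rho> ** adj (mat 1 + c *\<^sub>R K) = (\<rho> + c *\<^sub>R (K ** \<rho>)) ** (mat 1 + c *\<^sub>R adj K)"
    by (simp add: adj_add adj_scaleR matrix_mul_add_left scalar_matrix_assoc[symmetric])
  also have "\<dots> = \<rho> + c *\<^sub>R (K ** \<rho>) + c *\<^sub>R (\<rho> ** adj K + c *\<^sub>R (K ** \<rho> ** adj K))"
    by (simp only: matrix_add_ldistrib matrix_mul_add_left matrix_mul_rid matrix_mul_scaleR_right
        scalar_matrix_assoc[symmetric] scaleR_scaleR)
  finally show ?thesis
    by (simp add: power2_eq_square scaleR_add_right add_ac)
qed

lemma cinner_matrix_vector_mult: "cinner u ((A::'d::finite cmat) *v w) = cinner (adj A *v u) w"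
proof -
  have "cinner u (A *v w) = (\<Sum>i\<in>UNIV. \<Sum>j\<in>UNIV. cnj (u$i) * (A$i$j * w$j))"
    by (simp add: cinner_def matrix_vector_mult_def sum_distrib_left)
  also have "\<dots> = (\<Sum>j\<in>UNIV. \<Sum>i\<in>UNIV. cnj (u$i) * (A$i$j * w$j))"
    by (rule sum.swap)
  also have "\<dots> = cinner (adj A *v u) w"
    by (simp add: cinner_def matrix_vector_mult_def adj_def cnj_sum sum_distrib_right
        sum_distrib_left mult_ac)
  finally show ?thesis .
qed

lemma cinner_add_right: "cinner u (a + b) = cinner u a + cinner u b"
  by (simp add: cinner_def algebra_simps sum.distrib)

lemma cinner_scaleR_right: "cinner u (r *\<^sub>R a) = complex_of_real r * cinner u a"
  by (simp add: cinner_def sum_distrib_left) (simp add: scaleR_conv_of_real mult.left_commute)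

lemma scaleR_matrix_vector_mult: "((r *\<^sub>R X) :: 'd::finite cmat) *v w = r *\<^sub>R (X *v w)"
  by (simp add: matrix_vector_mult_def vec_eq_iff scaleR_sum_right)

lemma bounded_linear_cinner_matrix_vector_mult:
  "bounded_linear (\<lambda>M::'d::finite cmat. cinner u (M *v w))"
  unfolding linear_conv_bounded_linear[symmetric]
  by (rule linearI) (simp add: matrix_vector_mult_add_rdistrib cinner_add_right,
      simp add: scaleR_matrix_vector_mult cinner_scaleR_right, simp add: scaleR_conv_of_real)

lemma trace_scaleR: "trace (r *\<^sub>R (X::'d::finite cmat)) = r *\<^sub>R trace X"
  by (simp add: trace_def scaleR_sum_right)

lemma bounded_linear_trace: "bounded_linear (trace :: 'd::finite cmat \<Rightarrow> complex)"
  unfolding linear_conv_bounded_linear[symmetric]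
  by (rule linearI) (simp_all add: trace_add trace_scaleR)

lemma complex_linear_map_imp_linear:
  assumes "complex_linear_map (f :: 'd::finite superop)"
  shows "linear f"
proof (rule linearI)
  fix X Y :: "'d cmat" and r :: real
  show "f (X + Y) = f X + f Y"
    using assms by (simp add: complex_linear_map_def)
  show "f (r *\<^sub>R X) = r *\<^sub>R f X"
    using assms unfolding complex_linear_map_def by (metis csmult_of_real)
qed

section \<open>Complete positivity\<close>

definition block_form :: "nat \<Rightarrow> (nat \<Rightarrow> nat \<Rightarrow> 'd::finite cmat) \<Rightarrow> (nat \<Rightarrow> complex^'d) \<Rightarrow> complex"
  where "block_form k X v = (\<Sum>a<k. \<Sum>b<k. cinner (v a) (X a b *v v b))"

lemma psd_block_iff_block_form:
  "psd_block k X \<longleftrightarrow> (\<forall>v. Im (block_form k X v) = 0 \<and> 0 \<le> Re (block_form k X v))"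
  by (simp add: psd_block_def block_form_def)

lemma block_form_add: "block_form k (\<lambda>a b. X a b + Y a b) v = block_form k X v + block_form k Y v"
  by (simp add: block_form_def matrix_vector_mult_add_rdistrib cinner_add_right sum.distrib)

lemma block_form_scaleR:
  "block_form k (\<lambda>a b. r *\<^sub>R X a b) v = complex_of_real r * block_form k X v"
  by (simp add: block_form_def scaleR_matrix_vector_mult cinner_scaleR_right sum_distrib_left)

lemma block_form_conj:
  "block_form k (\<lambda>a b. B ** X a b ** adj B) v = block_form k X (\<lambda>a. adj B *v v a)"
  unfolding block_form_def
  by (intro sum.cong refl) (simp add: cinner_matrix_vector_mult matrix_vector_mul_assoc[symmetric])

lemma completely_positive_zero: "completely_positive (\<lambda>X::'d::finite cmat. 0)"
  by (simp add: completely_positive_def complex_linear_map_def psd_block_iff_block_form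
      block_form_def cinner_def)

lemma completely_positive_id: "completely_positive (\<lambda>X::'d::finite cmat. X)"
  by (simp add: completely_positive_def complex_linear_map_def)

lemma completely_positive_add:
  assumes "completely_positive f" "completely_positive g"
  shows "completely_positive (\<lambda>X. f X + g X)"
  using assms unfolding completely_positive_def complex_linear_map_def psd_block_iff_block_form
  by (simp add: block_form_add csmult_add_right)

lemma completely_positive_scaleR:
  assumes "completely_positive f" "0 \<le> r"
  shows "completely_positive (\<lambda>X. r *\<^sub>R f X)"
  using assms unfolding completely_positive_def complex_linear_map_def psd_block_iff_block_form
  by (simp add: block_form_scaleR csmult_scaleR scaleR_right_distrib)

lemma completely_positive_comp:
  assumes "completely_positive f" "completely_positive g"
  shows "completely_positive (\<lambda>X. f (g X))"
  using assms unfolding completely_positive_def complex_linear_map_def by simp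

lemma completely_positive_conj: "completely_positive (\<lambda>X::'d::finite cmat. B ** X ** adj B)"
  unfolding completely_positive_def complex_linear_map_def psd_block_iff_block_form
  by (simp add: block_form_conj matrix_mul_simps)

lemma completely_positive_sum:
  fixes m :: nat
  assumes "\<And>k. k < m \<Longrightarrow> completely_positive (f k)"
  shows "completely_positive (\<lambda>X. \<Sum>k<m. f k X)"
  using assms
proof (induction m)
  case 0
  then show ?case using completely_positive_zero by simp
next
  case (Suc m)
  have "completely_positive (\<lambda>X. (\<Sum>k<m. f k X) + f m X)"
    by (rule completely_positive_add) (use Suc in auto)
  then show ?case by simp
qed

lemma completely_positive_funpow:
  assumes "completely_positive f"
  shows "completely_positive (f ^^ n)"
proof (induction n)
  case 0
  then show ?case using completely_positive_id by (simp add: id_def)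
next
  case (Suc n)
  have "completely_positive (\<lambda>X. f ((f ^^ n) X))"
    by (rule completely_positive_comp) (use assms Suc in auto)
  then show ?case by (simp add: comp_def)
qed

lemma completely_positive_limit:
  fixes f :: "nat \<Rightarrow> 'd::finite superop"
  assumes cp: "\<And>n. completely_positive (f n)" and lim: "\<And>X. (\<lambda>n. f n X) \<longlonglongrightarrow> g X"
  shows "completely_positive g"
  unfolding completely_positive_def complex_linear_map_def
proof (intro conjI allI impI)
  fix X Y :: "'d cmat"
  have "(\<lambda>n. f n (X + Y)) \<longlonglongrightarrow> g X + g Y"
    using tendsto_add[OF lim[of X] lim[of Y]] cp
    by (simp add: completely_positive_def complex_linear_map_def)
  then show "g (X + Y) = g X + g Y" using lim[of "X + Y"] LIMSEQ_unique by blast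
next
  fix c and X :: "'d cmat"
  have "(\<lambda>n. f n (csmult c X)) \<longlonglongrightarrow> csmult c (g X)"
    using bounded_linear.tendsto[OF bounded_linear_csmult lim[of X]] cp
    by (simp add: completely_positive_def complex_linear_map_def)
  then show "g (csmult c X) = csmult c (g X)" using lim[of "csmult c X"] LIMSEQ_unique by blast
next
  fix k and X :: "nat \<Rightarrow> nat \<Rightarrow> 'd cmat"
  assume "psd_block k X"
  show "psd_block k (\<lambda>a b. g (X a b))"
    unfolding psd_block_iff_block_form
  proof
    fix v
    let ?q = "\<lambda>n. block_form k (\<lambda>a b. f n (X a b)) v"
    have q: "?q \<longlonglongrightarrow> block_form k (\<lambda>a b. g (X a b)) v"
      unfolding block_form_def
      by (intro tendsto_sum bounded_linear.tendsto[OF bounded_linear_cinner_matrix_vector_mult] lim)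
    have "Im (?q n) = 0 \<and> 0 \<le> Re (?q n)" for n
      using cp \<open>psd_block k X\<close> unfolding completely_positive_def psd_block_iff_block_form by blast
    then show "Im (block_form k (\<lambda>a b. g (X a b)) v) = 0 \<and> 0 \<le> Re (block_form k (\<lambda>a b. g (X a b)) v)"
      using LIMSEQ_unique[OF tendsto_Im[OF q]] LIMSEQ_le_const[OF tendsto_Re[OF q]] by simp
  qed
qed

section \<open>GKSL generators\<close>

definition jump_map :: "(nat \<Rightarrow> 'd::finite cmat) \<Rightarrow> (nat \<Rightarrow> nat \<Rightarrow> complex) \<Rightarrow> 'd superop" where
  "jump_map F D \<rho> = (\<Sum>i\<in>{1..CARD('d)^2 - 1}. \<Sum>j\<in>{1..CARD('d)^2 - 1}.
     csmult (D i j) (F i ** \<rho> ** adj (F j)))"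

definition jump_sum :: "(nat \<Rightarrow> 'd::finite cmat) \<Rightarrow> (nat \<Rightarrow> nat \<Rightarrow> complex) \<Rightarrow> 'd cmat" where
  "jump_sum F D = (\<Sum>i\<in>{1..CARD('d)^2 - 1}. \<Sum>j\<in>{1..CARD('d)^2 - 1}.
     csmult (D i j) (adj (F j) ** F i))"

definition lindblad_drift :: "(nat \<Rightarrow> 'd::finite cmat) \<Rightarrow> 'd cmat \<Rightarrow> (nat \<Rightarrow> nat \<Rightarrow> complex) \<Rightarrow> 'd cmat"
  where "lindblad_drift F H D = csmult (- \<i>) H - csmult (1/2) (jump_sum F D)"

lemma adj_jump_sum:
  fixes F :: "nat \<Rightarrow> 'd::finite cmat"
  assumes "psd_coeff (CARD('d)^2 - 1) D"
  shows "adj (jump_sum F D) = jump_sum F D"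
proof -
  let ?I = "{1..CARD('d)^2 - 1}"
  have "cnj (D i j) = D j i" if "i \<in> ?I" "j \<in> ?I" for i j
    using psd_on_hermitian[of ?I D i j] assms that by (simp add: psd_coeff_iff_psd_on)
  then have "adj (jump_sum F D) = (\<Sum>i\<in>?I. \<Sum>j\<in>?I. csmult (D j i) (adj (F i) ** F j))"
    by (simp add: jump_sum_def adj_sum adj_csmult adj_matrix_mul)
  also have "\<dots> = jump_sum F D"
    unfolding jump_sum_def by (rule sum.swap)
  finally show ?thesis .
qed

lemma lindblad_map_eq_jump_drift:
  fixes F :: "nat \<Rightarrow> 'd::finite cmat"
  assumes "psd_coeff (CARD('d)^2 - 1) D" and "hermitian H"
  shows "lindblad_map F H D \<rho>
    = jump_map F D \<rho> + lindblad_drift F H D ** \<rho> + \<rho> ** adj (lindblad_drift F H D)"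
proof -
  let ?I = "{1..CARD('d)^2 - 1}"
  have adj_drift: "adj (lindblad_drift F H D) = csmult \<i> H - csmult (1/2) (jump_sum F D)"
    using assms adj_jump_sum[OF assms(1)]
    by (simp add: lindblad_drift_def adj_diff adj_csmult hermitian_def)
  have dissipator: "(\<Sum>i\<in>?I. \<Sum>j\<in>?I. csmult (D i j) (F i ** \<rho> ** adj (F j)
          - csmult (1/2) (adj (F j) ** F i ** \<rho> + \<rho> ** (adj (F j) ** F i))))
        = jump_map F D \<rho> - csmult (1/2) (jump_sum F D) ** \<rho> - \<rho> ** csmult (1/2) (jump_sum F D)"
    by (simp add: jump_map_def jump_sum_def csmult_diff_right csmult_add_right csmult_csmult
        sum_subtractf sum.distrib matrix_mul_simps csmult_sum_right algebra_simps)
  show ?thesis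
    unfolding lindblad_map_def dissipator adj_drift unfolding lindblad_drift_def
    by (simp add: csmult_diff_right matrix_mul_simps algebra_simps csmult_minus_right
        csmult_minus_left)
qed

lemma jump_map_eq_kraus:
  fixes F :: "nat \<Rightarrow> 'd::finite cmat"
  defines "I \<equiv> {1..CARD('d)^2 - 1}"
  assumes "\<forall>i\<in>I. \<forall>j\<in>I. D i j = (\<Sum>k<m. W k i * cnj (W k j))"
  shows "jump_map F D \<rho>
    = (\<Sum>k<m. (\<Sum>i\<in>I. csmult (W k i) (F i)) ** \<rho> ** adj (\<Sum>i\<in>I. csmult (W k i) (F i)))"
proof -
  have "(\<Sum>i\<in>I. csmult (W k i) (F i)) ** \<rho> ** adj (\<Sum>i\<in>I. csmult (W k i) (F i))
      = (\<Sum>i\<in>I. \<Sum>j\<in>I. csmult (W k i * cnj (W k j)) (F i ** \<rho> ** adj (F j)))" for k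
    by (simp add: adj_sum adj_csmult matrix_mul_simps csmult_csmult csmult_sum_right
        matrix_mul_assoc mult.commute) (rule sum.swap)
  then have "(\<Sum>k<m. (\<Sum>i\<in>I. csmult (W k i) (F i)) ** \<rho> ** adj (\<Sum>i\<in>I. csmult (W k i) (F i)))
      = (\<Sum>i\<in>I. \<Sum>j\<in>I. \<Sum>k<m. csmult (W k i * cnj (W k j)) (F i ** \<rho> ** adj (F j)))"
    by (simp add: sum.swap[of _ "{..<m}"])
  also have "\<dots> = jump_map F D \<rho>"
    unfolding jump_map_def I_def[symmetric] by (intro sum.cong refl) (simp add: assms csmult_sum_left)
  finally show ?thesis ..
qed

lemma completely_positive_jump_map:
  fixes F :: "nat \<Rightarrow> 'd::finite cmat"
  assumes "psd_coeff (CARD('d)^2 - 1) D"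
  shows "completely_positive (jump_map F D)"
proof -
  obtain W and m :: nat
    where "\<forall>i\<in>{1..CARD('d)^2 - 1}. \<forall>j\<in>{1..CARD('d)^2 - 1}. D i j = (\<Sum>k<m. W k i * cnj (W k j))"
    using psd_on_gram[of "{1..CARD('d)^2 - 1}" D] assms by (auto simp: psd_coeff_iff_psd_on)
  then have kraus: "jump_map F D = (\<lambda>\<rho>. \<Sum>k<m. (\<Sum>i\<in>{1..CARD('d)^2 - 1}. csmult (W k i) (F i)) ** \<rho>
      ** adj (\<Sum>i\<in>{1..CARD('d)^2 - 1}. csmult (W k i) (F i)))"
    by (intro ext jump_map_eq_kraus)
  show ?thesis
    unfolding kraus by (intro completely_positive_sum completely_positive_conj)
qed

lemma linear_lindblad_map:
  fixes F :: "nat \<Rightarrow> 'd::finite cmat"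
  assumes "psd_coeff (CARD('d)^2 - 1) D" "hermitian H"
  shows "linear (lindblad_map F H D)"
proof -
  have "linear (jump_map F D)"
    using completely_positive_jump_map[OF assms(1)]
    by (simp add: completely_positive_def complex_linear_map_imp_linear)
  then show ?thesis
    unfolding lindblad_map_eq_jump_drift[OF assms, abs_def] linear_iff
    by (simp add: matrix_mul_simps algebra_simps)
qed

lemma lindblad_map_lin_comb:
  fixes F :: "nat \<Rightarrow> 'd::finite cmat"
  shows "lindblad_map F (a *\<^sub>R H1 + b *\<^sub>R H2)
      (\<lambda>i j. complex_of_real a * D1 i j + complex_of_real b * D2 i j) \<rho>
    = a *\<^sub>R lindblad_map F H1 D1 \<rho> + b *\<^sub>R lindblad_map F H2 D2 \<rho>"
proof -
  let ?I = "{1..CARD('d)^2 - 1}"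
  define M where "M i j = F i ** \<rho> ** adj (F j)
      - csmult (1/2) (adj (F j) ** F i ** \<rho> + \<rho> ** (adj (F j) ** F i))" for i j
  have lindblad: "lindblad_map F H D \<rho>
      = csmult (- \<i>) (H ** \<rho> - \<rho> ** H) + (\<Sum>i\<in>?I. \<Sum>j\<in>?I. csmult (D i j) (M i j))" for H D
    by (simp add: lindblad_map_def M_def)
  have "(\<Sum>i\<in>?I. \<Sum>j\<in>?I. csmult (complex_of_real a * D1 i j + complex_of_real b * D2 i j) (M i j))
     = a *\<^sub>R (\<Sum>i\<in>?I. \<Sum>j\<in>?I. csmult (D1 i j) (M i j))
       + b *\<^sub>R (\<Sum>i\<in>?I. \<Sum>j\<in>?I. csmult (D2 i j) (M i j))"
    by (simp add: csmult_add_left csmult_of_real_mult sum.distrib scaleR_sum_right)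
  moreover have "csmult (- \<i>) ((a *\<^sub>R H1 + b *\<^sub>R H2) ** \<rho> - \<rho> ** (a *\<^sub>R H1 + b *\<^sub>R H2))
     = a *\<^sub>R csmult (- \<i>) (H1 ** \<rho> - \<rho> ** H1) + b *\<^sub>R csmult (- \<i>) (H2 ** \<rho> - \<rho> ** H2)"
    by (simp add: matrix_mul_simps csmult_add_right csmult_diff_right csmult_scaleR algebra_simps)
  ultimately show ?thesis
    unfolding lindblad by (simp add: algebra_simps)
qed

lemma GKSL_form_lin_comb:
  fixes F :: "nat \<Rightarrow> 'd::finite cmat"
  assumes "GKSL_form F Z1" "GKSL_form F Z2" "a \<ge> 0" "b \<ge> 0"
  shows "GKSL_form F (\<lambda>\<rho>. a *\<^sub>R Z1 \<rho> + b *\<^sub>R Z2 \<rho>)"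
proof -
  let ?I = "{1..CARD('d)^2 - 1}"
  obtain H1 D1 where "hermitian H1" "psd_on ?I D1" and Z1: "Z1 = lindblad_map F H1 D1"
    using assms(1) unfolding GKSL_form_def psd_coeff_iff_psd_on by blast
  obtain H2 D2 where "hermitian H2" "psd_on ?I D2" and Z2: "Z2 = lindblad_map F H2 D2"
    using assms(2) unfolding GKSL_form_def psd_coeff_iff_psd_on by blast
  let ?D = "\<lambda>i j. complex_of_real a * D1 i j + complex_of_real b * D2 i j"
  have "hermitian (a *\<^sub>R H1 + b *\<^sub>R H2)"
    using \<open>hermitian H1\<close> \<open>hermitian H2\<close> by (simp add: hermitian_def adj_add adj_scaleR)
  moreover have "psd_on ?I ?D"
    using psd_on_lin_comb \<open>psd_on ?I D1\<close> \<open>psd_on ?I D2\<close> assms(3,4) .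
  moreover have "(\<lambda>\<rho>. a *\<^sub>R Z1 \<rho> + b *\<^sub>R Z2 \<rho>) = lindblad_map F (a *\<^sub>R H1 + b *\<^sub>R H2) ?D"
    by (rule ext) (simp add: Z1 Z2 lindblad_map_lin_comb)
  ultimately show ?thesis
    unfolding GKSL_form_def psd_coeff_iff_psd_on by blast
qed

section \<open>The exponential of a GKSL generator is CPTP\<close>

lemma completely_positive_exp_endo:
  fixes Z :: "'d::finite cmat endo"
  assumes cp: "\<And>n. completely_positive (endo_apply (A n))" and "0 \<le> C"
    and close: "\<And>n. n \<ge> 1 \<Longrightarrow> norm (A n - (1 + (1 / real n) *\<^sub>R Z)) \<le> C / (real n)\<^sup>2"
  shows "completely_positive (endo_apply (exp Z))"
proof (rule completely_positive_limit)
  show "completely_positive (endo_apply (A n ^ n))" for n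
    using completely_positive_funpow[OF cp, of n] by (simp add: endo_apply_power[abs_def])
  show "(\<lambda>n. endo_apply (A n ^ n) \<rho>) \<longlonglongrightarrow> endo_apply (exp Z) \<rho>" for \<rho>
    by (rule endo_apply.tendsto[OF tendsto_power_exp[OF \<open>0 \<le> C\<close> close] tendsto_const])
qed

lemma completely_positive_exp_lindblad:
  fixes F :: "nat \<Rightarrow> 'd::finite cmat"
  assumes psd: "psd_coeff (CARD('d)^2 - 1) D" and herm: "hermitian H"
  shows "completely_positive (endo_apply (exp (endo_of (lindblad_map F H D))))"
proof (rule completely_positive_exp_endo)
  define K where "K = lindblad_drift F H D"
  define B where "B n = mat 1 + (1 / real n) *\<^sub>R K" for n
  define f where "f n \<rho> = B n ** \<rho> ** adj (B n) + (1 / real n) *\<^sub>R jump_map F D \<rho>" for n \<rho>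
  have cp_f: "completely_positive (f n)" for n
    unfolding f_def
    by (intro completely_positive_add completely_positive_conj completely_positive_scaleR
        completely_positive_jump_map[OF psd]) simp
  then have f: "endo_apply (endo_of (f n)) = f n" for n
    by (simp add: endo_apply_endo_of completely_positive_def complex_linear_map_imp_linear)
  show "completely_positive (endo_apply (endo_of (f n)))" for n
    using cp_f by (simp add: f)
  have Z: "endo_apply (endo_of (lindblad_map F H D)) = lindblad_map F H D"
    by (rule endo_apply_endo_of[OF linear_lindblad_map[OF psd herm]])
  have KK: "endo_apply (endo_of (\<lambda>\<rho>. K ** \<rho> ** adj K)) = (\<lambda>\<rho>. K ** \<rho> ** adj K)"
    by (rule endo_apply_endo_of)
      (simp add: completely_positive_conj[unfolded completely_positive_def] complex_linear_map_imp_linear)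
  have conj: "B n ** \<rho> ** adj (B n) = \<rho> + (1 / real n) *\<^sub>R (K ** \<rho>)
      + (1 / real n) *\<^sub>R (\<rho> ** adj K) + (1 / real n)\<^sup>2 *\<^sub>R (K ** \<rho> ** adj K)" for n \<rho>
    unfolding B_def by (rule conj_mat_1_plus_scaleR)
  have "endo_of (f n) = 1 + (1 / real n) *\<^sub>R endo_of (lindblad_map F H D)
      + (1 / real n)\<^sup>2 *\<^sub>R endo_of (\<lambda>\<rho>. K ** \<rho> ** adj K)" for n
    by (rule endo_eqI) (simp add: f Z KK f_def conj lindblad_map_eq_jump_drift[OF psd herm]
        K_def[symmetric] algebra_simps)
  then show "norm (endo_of (f n) - (1 + (1 / real n) *\<^sub>R endo_of (lindblad_map F H D)))
      \<le> norm (endo_of (\<lambda>\<rho>. K ** \<rho> ** adj K)) / (real n)\<^sup>2" for n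
    by (simp add: power_divide)
qed simp

lemma trace_exp_endo:
  fixes Z :: "'d::finite cmat endo"
  assumes "\<And>\<rho>. trace (endo_apply Z \<rho>) = 0"
  shows "trace (endo_apply (exp Z) \<rho>) = trace \<rho>"
proof -
  have "(\<lambda>n. endo_apply (Z ^ n /\<^sub>R fact n) \<rho>) sums endo_apply (exp Z) \<rho>"
    unfolding exp_def
    by (rule bounded_linear.sums[OF endo_apply.bounded_linear_left summable_sums[OF summable_exp_generic]])
  then have "(\<lambda>n. trace (endo_apply (Z ^ n /\<^sub>R fact n) \<rho>)) sums trace (endo_apply (exp Z) \<rho>)"
    by (rule bounded_linear.sums[OF bounded_linear_trace])
  moreover have "(\<lambda>n. trace (endo_apply (Z ^ n /\<^sub>R fact n) \<rho>)) = (\<lambda>n. if n = 0 then trace \<rho> else 0)"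
  proof
    fix n
    show "trace (endo_apply (Z ^ n /\<^sub>R fact n) \<rho>) = (if n = 0 then trace \<rho> else 0)"
    proof (cases n)
      case (Suc m)
      have "endo_apply (Z ^ n) \<rho> = endo_apply Z (endo_apply (Z ^ m) \<rho>)"
        by (simp add: Suc)
      then show ?thesis
        using Suc by (simp add: trace_scaleR assms)
    qed simp
  qed
  ultimately have "(\<lambda>n. if n = 0 then trace \<rho> else 0) sums trace (endo_apply (exp Z) \<rho>)"
    by simp
  moreover have "(\<lambda>n. if n = 0 then trace \<rho> else 0) sums trace \<rho>"
    by (rule sums_single)
  ultimately show ?thesis
    by (rule sums_unique2)
qed

section \<open>Dynamics generated by a commuting continuous family\<close>

locale commuting_continuous_family =
  fixes L :: "real \<Rightarrow> 'd::finite superop"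
  assumes linear_generator: "\<And>t. t \<ge> 0 \<Longrightarrow> linear (L t)"
    and continuous_generator: "\<And>\<rho>. continuous_on {0..} (\<lambda>t. L t \<rho>)"
    and commuting: "commutative_family L"
begin

lemma integrable_generator: "(\<lambda>\<tau>. L \<tau> \<rho>) integrable_on {0..s}"
  by (rule integrable_continuous_real, rule continuous_on_subset[OF continuous_generator]) auto

lemma linear_Zint: "linear (Zint L s)"
proof (rule linearI)
  fix X Y and r :: real
  have "Zint L s (X + Y) = integral {0..s} (\<lambda>\<tau>. L \<tau> X + L \<tau> Y)"
    unfolding Zint_def by (rule integral_cong) (simp add: linear_add[OF linear_generator])
  then show "Zint L s (X + Y) = Zint L s X + Zint L s Y"
    unfolding Zint_def by (simp add: integral_add[OF integrable_generator integrable_generator])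
  have "Zint L s (r *\<^sub>R X) = integral {0..s} (\<lambda>\<tau>. r *\<^sub>R L \<tau> X)"
    unfolding Zint_def by (rule integral_cong) (simp add: linear_scale[OF linear_generator])
  then show "Zint L s (r *\<^sub>R X) = r *\<^sub>R Zint L s X"
    by (simp add: Zint_def)
qed

lemma Zint_generator_commute:
  assumes "a \<ge> 0"
  shows "Zint L s (L a \<rho>) = L a (Zint L s \<rho>)"
proof -
  have "Zint L s (L a \<rho>) = integral {0..s} (L a \<circ> (\<lambda>\<tau>. L \<tau> \<rho>))"
    unfolding Zint_def
  proof (rule integral_cong)
    fix \<tau> assume "\<tau> \<in> {0..s}"
    then have "L \<tau> \<circ> L a = L a \<circ> L \<tau>"
      using commuting assms by (simp add: commutative_family_def)
    then show "L \<tau> (L a \<rho>) = (L a \<circ> (\<lambda>\<tau>. L \<tau> \<rho>)) \<tau>"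
      by (metis comp_apply)
  qed
  also have "\<dots> = L a (Zint L s \<rho>)"
    unfolding Zint_def
    by (rule integral_linear[OF integrable_generator])
      (simp add: linear_generator[OF assms] linear_conv_bounded_linear[symmetric])
  finally show ?thesis .
qed

lemma Zint_Zint_commute: "Zint L s (Zint L t \<rho>) = Zint L t (Zint L s \<rho>)"
proof -
  have "Zint L s (Zint L t \<rho>) = integral {0..s} (Zint L t \<circ> (\<lambda>\<tau>. L \<tau> \<rho>))"
    unfolding Zint_def[of L s] by (rule integral_cong) (simp add: Zint_generator_commute)
  also have "\<dots> = Zint L t (Zint L s \<rho>)"
    unfolding Zint_def[of L s]
    by (rule integral_linear[OF integrable_generator])
      (simp add: linear_Zint linear_conv_bounded_linear[symmetric])
  finally show ?thesis .
qed

lemma Zint_has_vector_derivative: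
  assumes "t \<ge> 0"
  shows "((\<lambda>s. Zint L s \<rho>) has_vector_derivative L t \<rho>) (at t within {0..})"
proof -
  have "((\<lambda>u. integral {0..u} (\<lambda>\<tau>. L \<tau> \<rho>)) has_vector_derivative L t \<rho>) (at t within {0..t+1})"
    by (rule integral_has_vector_derivative, rule continuous_on_subset[OF continuous_generator])
      (use assms in auto)
  moreover have "at t within {0..} = at t within {0..t+1}"
    by (rule at_within_nhd[where S = "{t - 1 <..< t + 1}"]) auto
  ultimately show ?thesis
    by (simp add: Zint_def)
qed

definition generator_endo :: "real \<Rightarrow> 'd cmat endo"
  where "generator_endo t = endo_of (L t)"

definition Zint_endo :: "real \<Rightarrow> 'd cmat endo"
  where "Zint_endo s = endo_of (Zint L s)"

lemma endo_apply_generator_endo: "t \<ge> 0 \<Longrightarrow> endo_apply (generator_endo t) = L t"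
  unfolding generator_endo_def by (rule endo_apply_endo_of[OF linear_generator])

lemma endo_apply_Zint_endo: "endo_apply (Zint_endo s) = Zint L s"
  unfolding Zint_endo_def by (rule endo_apply_endo_of[OF linear_Zint])

lemma Zint_endo_0: "Zint_endo 0 = 0"
  by (rule endo_eqI) (simp add: endo_apply_Zint_endo Zint_def)

lemma Zint_endo_commute: "Zint_endo s * Zint_endo t = Zint_endo t * Zint_endo s"
  by (rule endo_eqI) (simp add: endo_apply_Zint_endo Zint_Zint_commute)

lemma Zint_endo_generator_endo_commute:
  "t \<ge> 0 \<Longrightarrow> Zint_endo s * generator_endo t = generator_endo t * Zint_endo s"
  by (rule endo_eqI) (simp add: endo_apply_Zint_endo endo_apply_generator_endo Zint_generator_commute)

lemma Zint_endo_has_vector_derivative: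
  "t \<ge> 0 \<Longrightarrow> (Zint_endo has_vector_derivative generator_endo t) (at t within {0..})"
  by (rule has_vector_derivative_endoI)
    (simp add: endo_apply_Zint_endo endo_apply_generator_endo Zint_has_vector_derivative)

lemma superop_exp_Zint: "superop_exp (Zint L s) = endo_apply (exp (Zint_endo s))"
  by (rule ext) (simp add: superop_exp_def endo_apply_exp endo_apply_Zint_endo)

lemma solves_master_superop_exp: "solves_master L (\<lambda>s. superop_exp (Zint L s))"
  unfolding solves_master_def superop_exp_Zint
proof (intro conjI allI impI)
  show "endo_apply (exp (Zint_endo 0)) = id"
    by (rule ext) (simp add: Zint_endo_0)
next
  fix t :: real and \<rho>
  assume "0 \<le> t"
  have "((\<lambda>s. exp (Zint_endo s)) has_vector_derivative exp (Zint_endo t) * generator_endo t)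
      (at t within {0..})"
    using \<open>0 \<le> t\<close> Zint_endo_commute
    by (intro has_vector_derivative_exp_commuting Zint_endo_has_vector_derivative) auto
  from endo_apply.has_vector_derivative[OF this has_vector_derivative_const]
  have "((\<lambda>s. endo_apply (exp (Zint_endo s)) \<rho>) has_vector_derivative
      endo_apply (exp (Zint_endo t) * generator_endo t) \<rho>) (at t within {0..})"
    by (simp add: endo_apply.zero_right)
  moreover have "exp (Zint_endo t) * generator_endo t = generator_endo t * exp (Zint_endo t)"
    using mult_exp_commute[OF Zint_endo_generator_endo_commute[OF \<open>0 \<le> t\<close>]] by simp
  ultimately show "((\<lambda>s. endo_apply (exp (Zint_endo s)) \<rho>) has_vector_derivative
      L t (endo_apply (exp (Zint_endo t)) \<rho>)) (at t within {0..})"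
    by (simp add: endo_apply_generator_endo[OF \<open>0 \<le> t\<close>])
qed

lemma solves_master_unique:
  assumes "solves_master L \<Lambda>" and "t \<ge> 0"
  shows "\<Lambda> t = superop_exp (Zint L t)"
proof
  fix \<rho>
  define y where "y s = endo_apply (exp (- Zint_endo s)) (\<Lambda> s \<rho>)" for s
  have "(y has_vector_derivative 0) (at s within {0..})" if "s \<in> {0..}" for s
  proof -
    have "s \<ge> 0" using that by simp
    have "((\<lambda>u. exp (- Zint_endo u)) has_vector_derivative exp (- Zint_endo s) * - generator_endo s)
        (at s within {0..})"
      using \<open>s \<ge> 0\<close> Zint_endo_commute
      by (intro has_vector_derivative_exp_commuting has_vector_derivative_minus
          Zint_endo_has_vector_derivative) auto
    moreover have "((\<lambda>u. \<Lambda> u \<rho>) has_vector_derivative L s (\<Lambda> s \<rho>)) (at s within {0..})"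
      using assms(1) \<open>s \<ge> 0\<close> unfolding solves_master_def by blast
    ultimately show ?thesis
      unfolding y_def using endo_apply.has_vector_derivative
      by (fastforce simp: endo_apply_generator_endo[OF \<open>s \<ge> 0\<close>] endo_apply.minus_right)
  qed
  then obtain c where "\<And>s. s \<in> {0..} \<Longrightarrow> y s = c"
    using has_vector_derivative_zero_constant[OF convex_real_interval(1)] by blast
  moreover have "y 0 = \<rho>"
    using assms(1) by (simp add: y_def Zint_endo_0 solves_master_def)
  ultimately have "y t = \<rho>"
    using \<open>t \<ge> 0\<close> by force
  have "\<Lambda> t \<rho> = endo_apply (exp (Zint_endo t) * exp (- Zint_endo t)) (\<Lambda> t \<rho>)"
    by (simp add: exp_minus_inverse)
  also have "\<dots> = superop_exp (Zint L t) \<rho>"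
    using \<open>y t = \<rho>\<close> by (simp add: y_def superop_exp_Zint)
  finally show "\<Lambda> t \<rho> = superop_exp (Zint L t) \<rho>" .
qed

lemma CPTP_superop_exp_Zint:
  assumes trace_free: "\<And>t X. t \<ge> 0 \<Longrightarrow> trace (L t X) = 0" and "GKSL_form F (Zint L t)"
  shows "CPTP (superop_exp (Zint L t))"
proof -
  obtain H D where "hermitian H" "psd_coeff (CARD('d)^2 - 1) D" and Z: "Zint L t = lindblad_map F H D"
    using assms(2) unfolding GKSL_form_def by blast
  have "Zint_endo t = endo_of (lindblad_map F H D)"
    by (simp add: Zint_endo_def Z)
  then have "completely_positive (superop_exp (Zint L t))"
    unfolding superop_exp_Zint
    using completely_positive_exp_lindblad[OF \<open>psd_coeff _ D\<close> \<open>hermitian H\<close>] by simp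
  moreover have "trace (endo_apply (Zint_endo t) \<rho>) = 0" for \<rho>
  proof -
    have "trace (endo_apply (Zint_endo t) \<rho>) = integral {0..t} (trace \<circ> (\<lambda>\<tau>. L \<tau> \<rho>))"
      unfolding endo_apply_Zint_endo Zint_def
      by (rule integral_linear[OF integrable_generator bounded_linear_trace, symmetric])
    also have "\<dots> = integral {0..t} (\<lambda>_. 0)"
      by (rule integral_cong) (use trace_free in auto)
    finally show ?thesis
      by simp
  qed
  then have "trace_preserving (superop_exp (Zint L t))"
    unfolding trace_preserving_def superop_exp_Zint using trace_exp_endo by blast
  ultimately show ?thesis
    by (simp add: CPTP_def)
qed

end

lemma SSC_dynamics:
  fixes L :: "real \<Rightarrow> 'd::finite superop"
  assumes gen: "\<And>t. t \<ge> 0 \<Longrightarrow> dyn_gen (L t)"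
    and cont: "\<And>\<rho>. continuous_on {0..} (\<lambda>t. L t \<rho>)" and "SSC F L"
  shows "solves_master L (\<lambda>s. superop_exp (Zint L s))"
    and "solves_master L \<Lambda> \<Longrightarrow> t \<ge> 0 \<Longrightarrow> \<Lambda> t = superop_exp (Zint L t) \<and> CPTP (\<Lambda> t)"
proof -
  interpret commuting_continuous_family L
    using gen cont \<open>SSC F L\<close>
    by (intro commuting_continuous_family.intro) (auto simp: dyn_gen_def SSC_def complex_linear_map_imp_linear)
  show "solves_master L (\<lambda>s. superop_exp (Zint L s))"
    by (rule solves_master_superop_exp)
  assume "solves_master L \<Lambda>" "t \<ge> 0"
  moreover have "CPTP (superop_exp (Zint L t))"
    using gen \<open>SSC F L\<close> \<open>t \<ge> 0\<close>
    by (intro CPTP_superop_exp_Zint) (auto simp: dyn_gen_def SSC_def semigroup_simulable_def)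
  ultimately show "\<Lambda> t = superop_exp (Zint L t) \<and> CPTP (\<Lambda> t)"
    using solves_master_unique by simp
qed

section \<open>Non-negative combinations of SSC families\<close>

lemma dyn_gen_lin_comb:
  assumes "dyn_gen (L1 t)" "dyn_gen (L2 t)"
  shows "dyn_gen (lin_comb \<alpha> L1 \<beta> L2 t)"
  using assms unfolding dyn_gen_def complex_linear_map_def lin_comb_def
  by (simp add: csmult_add_right csmult_scaleR adj_add adj_scaleR trace_add trace_scaleR algebra_simps)

lemma Zint_lin_comb:
  assumes "\<And>\<rho>. continuous_on {0..} (\<lambda>t. L1 t \<rho>)" and "\<And>\<rho>. continuous_on {0..} (\<lambda>t. L2 t \<rho>)"
  shows "Zint (lin_comb \<alpha> L1 \<beta> L2) t = (\<lambda>\<rho>. \<alpha> *\<^sub>R Zint L1 t \<rho> + \<beta> *\<^sub>R Zint L2 t \<rho>)"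
proof
  fix \<rho>
  have "(\<lambda>\<tau>. L1 \<tau> \<rho>) integrable_on {0..t}" "(\<lambda>\<tau>. L2 \<tau> \<rho>) integrable_on {0..t}"
    by (rule integrable_continuous_real, rule continuous_on_subset[OF assms(1)], force,
        rule integrable_continuous_real, rule continuous_on_subset[OF assms(2)], force)
  then show "Zint (lin_comb \<alpha> L1 \<beta> L2) t \<rho> = \<alpha> *\<^sub>R Zint L1 t \<rho> + \<beta> *\<^sub>R Zint L2 t \<rho>"
    unfolding Zint_def lin_comb_def by (simp add: integral_add integrable_cmul)
qed

lemma SSC_lin_comb:
  assumes "SSC F L1" "SSC F L2" "commutative_family (lin_comb \<alpha> L1 \<beta> L2)" "\<alpha> \<ge> 0" "\<beta> \<ge> 0"
    and "\<And>\<rho>. continuous_on {0..} (\<lambda>t. L1 t \<rho>)" "\<And>\<rho>. continuous_on {0..} (\<lambda>t. L2 t \<rho>)"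
  shows "SSC F (lin_comb \<alpha> L1 \<beta> L2)"
proof -
  have "GKSL_form F (Zint (lin_comb \<alpha> L1 \<beta> L2) t)" if "t \<ge> 0" for t
    unfolding Zint_lin_comb[OF assms(6,7)]
    by (intro GKSL_form_lin_comb) (use assms(1,2,4,5) that in \<open>auto simp: SSC_def semigroup_simulable_def\<close>)
  then show ?thesis
    using assms(3) by (simp add: SSC_def semigroup_simulable_def)
qed

theorem lemma2:
  fixes F :: "nat \<Rightarrow> complex^'d::finite^'d"
    and L1 L2 :: "real \<Rightarrow> 'd superop"
  assumes basis: "op_basis F"
    and gen1: "\<forall>t\<ge>0. dyn_gen (L1 t)"
    and gen2: "\<forall>t\<ge>0. dyn_gen (L2 t)"
    and cont1: "\<forall>\<rho>. continuous_on {0..} (\<lambda>t. L1 t \<rho>)"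
    and cont2: "\<forall>\<rho>. continuous_on {0..} (\<lambda>t. L2 t \<rho>)"
    and ssc1: "SSC F L1"
    and ssc2: "SSC F L2"
    and comm: "\<forall>\<alpha>\<ge>0. \<forall>\<beta>\<ge>0. commutative_family (lin_comb \<alpha> L1 \<beta> L2)"
  shows "additive L1 L2 \<and>
    (\<forall>\<alpha>\<ge>0. \<forall>\<beta>\<ge>0.
       SSC F (lin_comb \<alpha> L1 \<beta> L2) \<and>
       (\<forall>\<Lambda>. solves_master (lin_comb \<alpha> L1 \<beta> L2) \<Lambda> \<longrightarrow>
          (\<forall>t\<ge>0. \<Lambda> t = superop_exp (Zint (lin_comb \<alpha> L1 \<beta> L2) t) \<and>
                  CPTP (\<Lambda> t))))"
proof -
  have "SSC F (lin_comb \<alpha> L1 \<beta> L2) \<and> solves_master (lin_comb \<alpha> L1 \<beta> L2)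
      (\<lambda>s. superop_exp (Zint (lin_comb \<alpha> L1 \<beta> L2) s)) \<and>
    (\<forall>\<Lambda>. solves_master (lin_comb \<alpha> L1 \<beta> L2) \<Lambda> \<longrightarrow>
      (\<forall>t\<ge>0. \<Lambda> t = superop_exp (Zint (lin_comb \<alpha> L1 \<beta> L2) t) \<and> CPTP (\<Lambda> t)))"
    if "\<alpha> \<ge> 0" "\<beta> \<ge> 0" for \<alpha> \<beta>
  proof -
    have gen: "dyn_gen (lin_comb \<alpha> L1 \<beta> L2 t)" if "t \<ge> 0" for t
      using gen1 gen2 that by (simp add: dyn_gen_lin_comb)
    have cont: "continuous_on {0..} (\<lambda>t. lin_comb \<alpha> L1 \<beta> L2 t \<rho>)" for \<rho>
      unfolding lin_comb_def using cont1 cont2 by (intro continuous_intros) auto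
    have "SSC F (lin_comb \<alpha> L1 \<beta> L2)"
      using SSC_lin_comb[OF ssc1 ssc2 _ that] comm that cont1 cont2 by blast
    then show ?thesis
      using SSC_dynamics[OF gen cont] by blast
  qed
  then show ?thesis
    unfolding additive_def physical_def by blast
qed

end
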